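(* Let $D=(Ele,Rg,rt)$ be a DTD and $P=(\mathcal A,\mathcal F)$ a policy over $D$. Then $P$ is consistent if and only if all of the following hold: (1) for every $A\in Ele$ with $Rg(A)=B^*$: if $(A,\mathsf{insert}(B))\in\mathcal A$ and $(A,\mathsf{delete}(B))\in\mathcal A$, then nothing is forbidden below $B$ in $P$; (2) for every $A\in Ele$ with $Rg(A)=B_1+\dots+B_n$: no edge $(B_i,B_j)$ of $G_A^+$ belongs to $F_A$; (3) for every $A\in Ele$ with $Rg(A)=B_1+\dots+B_n$ and every $i\in\{1,\dots,n\}$: if $B_i$ lies on a (directed) cycle of $G_A$, then nothing is forbidden below $B_i$ in $P$.
   Context: Let $\mathcal L$ be an infinite set of labels and $\mathsf{str}\notin\mathcal L$ a special symbol. A DTD is a triple $D=(Ele,Rg,rt)$ where $Ele\subseteq\mathcal L$ is finite, $rt\in Ele$ is the root type, and for each $A\in Ele$, $Rg(A)$ is one of: $\mathsf{str}$, $\epsilon$, $B_1,\dots,B_n$ (concatenation), $B_1+\dots+B_n$ (disjunction), or $B_1^*$ (Kleene star), where the $B_i\in Ele$ are pairwise distinct and are called subelement types of $A$. DTDs are non-recursive: the directed graph on $Ele$ with an edge $A\to B$ whenever $B$ is a subelement type of $A$ is acyclic. $\le_D$ denotes the reflexive–transitive closure of the subelement relation. We assume every element type is reachable from the root: $rt\le_D A$ for all $A\in Ele$. An XML tree is $t=(N_t,E_t,\lambda_t,r_t,v_t)$: a finite rooted unordered tree with node set $N_t$, parent–child edge set $E_t$, root $r_t$, labelling $\lambda_t:N_t\to\mathcal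 L\cup\{\mathsf{str}\}$, and a function $v_t$ assigning a string to each node labelled $\mathsf{str}$. The tree $t$ conforms to $D$ at $A\in Ele$ if $\lambda_t(r_t)=A$, every node is labelled by an element of $Ele\cup\{\mathsf{str}\}$, every node labelled $B\in Ele$ has children whose labels, listed in some order, form a word of the language of the regular expression $Rg(B)$ (with $Rg(B)=\mathsf{str}$ meaning a single child labelled $\mathsf{str}$ and $\epsilon$ meaning no children), and every node labelled $\mathsf{str}$ is a leaf with a defined string value. $I_D(A)$ is the set of trees conforming to $D$ at $A$, and $I_D=I_D(rt)$. Trees $t_1,t_2$ are isomorphic, $t_1\equiv t_2$, if there is a bijection $N_{t_1}\to N_{t_2}$ preserving root, edges, labels and string values. Atomic updates on a tree $t$: $\mathsf{insert}(n,t')$ adds the tree $t'$ with its root as a new child of $n$; $\mathsf{delete}(n)$ removes $n$ and all its descendants; $\mathsf{replace}(n,t')$ removes the subtree rooted at $n$ and attaches $t'$ (by its root) as a child of the former parent of $n$; $\mathsf{replace}(n,s)$, for a string $s$, sets the string value of $n$ to $s$. An update is valid on $t$ if $n\in N_t$ and the tree $t'$ (if present) has node set disjoint from $N_t$; $[\![op]\!](t)$ denotes the result. For a sequence, $[\![op_1;\dots;op_k]\!](t)=[\![op_k]\!](\cdots[\![op_1]\!](t)\cdots)$, and the sequence is valid on $t$ if each $op_i$ is valid on the result of $op_1;\dots;op_{i-1}$. Update access types (UATs) are expressions $(A,\mathsf{insert}(B))$, $(A,\mathsf{delete}(B))$, $(A,\mathsf{replace}(B,B'))$ with $B\neq B'$,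 and $(A,\mathsf{replace}(\mathsf{str},\mathsf{str}))$, with $A\in Ele$; $A$ is the element type of the UAT. Such a UAT is valid for $D$ iff, respectively: $Rg(A)=B^*$; $Rg(A)=B^*$; $Rg(A)=B_1+\dots+B_n$ with $B,B'\in\{B_1,\dots,B_n\}$, $B\neq B'$; $Rg(A)=\mathsf{str}$. $\mathrm{valid}(D)$ is the set of UATs valid for $D$. An atomic update matches a UAT on $t$ as follows: $\mathsf{insert}(n,t')$ matches $(A,\mathsf{insert}(B))$ if $\lambda_t(n)=A$ and $t'\in I_D(B)$; $\mathsf{delete}(n)$ matches $(A,\mathsf{delete}(B))$ if $\lambda_t(n)=B$ and the parent of $n$ is labelled $A$; $\mathsf{replace}(n,t')$ matches $(A,\mathsf{replace}(B,B'))$ if $\lambda_t(n)=B$, the parent of $n$ is labelled $A$, $t'\in I_D(B')$ and $B\neq B'$; $\mathsf{replace}(n,s)$ matches $(A,\mathsf{replace}(\mathsf{str},\mathsf{str}))$ if $\lambda_t(n)=\mathsf{str}$ and the parent of $n$ is labelled $A$. For a set $S$ of UATs, $[\![S]\!]_t$ is the set of atomic updates matching some element of $S$ on $t$. A sequence $op_1;\dots;op_k$ is allowed on $t$ by $S$ if it is valid on $t$ and $op_i\in[\![S]\!]_{t_{i-1}}$ for all $i$, where $t_0=t$ and $t_i=[\![op_i]\!](t_{i-1})$. A policy over $D$ is a pair $P=(\mathcal A,\mathcal F)$ with $\mathcal A,\mathcal F\subseteq\mathrm{valid}(D)$ and $\mathcal A\cap\mathcal F=\emptyset$ (allowed and forbidden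 UATs); it is total if $\mathcal A\cup\mathcal F=\mathrm{valid}(D)$ and partial otherwise. $P$ is consistent if there exist no $t\in I_D$, no sequence $op_1;\dots;op_k$ ($k\ge1$) allowed on $t$ by $\mathcal A$, and no $op_0\in[\![\mathcal F]\!]_t$ valid on $t$ and non-trivial (i.e. $[\![op_0]\!](t)\not\equiv t$) such that $[\![op_1;\dots;op_k]\!](t)\equiv[\![op_0]\!](t)$. Nothing is forbidden below $B$ in $P=(\mathcal A,\mathcal F)$ means: $\mathcal F$ contains no UAT whose element type $C$ satisfies $B\le_D C$. For $A$ with $Rg(A)=B_1+\dots+B_n$, the replace graph $G_A$ is the directed graph with vertices $B_1,\dots,B_n$ and an edge $(B_i,B_j)$ iff $(A,\mathsf{replace}(B_i,B_j))\in\mathcal A$; $G_A^+$ is its transitive closure; and $F_A=\{(B_i,B_j)\mid (A,\mathsf{replace}(B_i,B_j))\in\mathcal F\}$ is the set of forbidden edges of $A$. *)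

theory Defs
  imports Main "HOL-Library.Multiset"
begin

datatype 'l lab = Elem 'l | Str

text \<open>Right-hand sides of DTD rules.  RConc [B1,..,Bn] is B1,...,Bn; RDisj [B1,..,Bn] is B1+...+Bn.\<close>
datatype 'l rg = RStr | REps | RConc "'l list" | RDisj "'l list" | RStar 'l

record 'l dtd =
  d_ele :: "'l set"
  d_rg  :: "'l \<Rightarrow> 'l rg"
  d_rt  :: 'l

fun subs :: "'l rg \<Rightarrow> 'l set" where
  "subs RStr = {}"
| "subs REps = {}"
| "subs (RConc Bs) = set Bs"
| "subs (RDisj Bs) = set Bs"
| "subs (RStar B) = {B}"

fun rg_ok :: "'l rg \<Rightarrow> bool" where
  "rg_ok (RConc Bs) = (Bs \<noteq> [] \<and> distinct Bs)"
| "rg_ok (RDisj Bs) = (Bs \<noteq> [] \<and> distinct Bs)"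
| "rg_ok _ = True"

definition sub_rel :: "'l dtd \<Rightarrow> ('l \<times> 'l) set" where
  "sub_rel D = {(A, B). A \<in> d_ele D \<and> B \<in> subs (d_rg D A)}"

definition le_D :: "'l dtd \<Rightarrow> 'l \<Rightarrow> 'l \<Rightarrow> bool" where
  "le_D D A B \<longleftrightarrow> (A, B) \<in> (sub_rel D)\<^sup>*"

definition wf_dtd :: "'l dtd \<Rightarrow> bool" where
  "wf_dtd D \<longleftrightarrow> finite (d_ele D) \<and> d_rt D \<in> d_ele D
     \<and> (\<forall>A \<in> d_ele D. subs (d_rg D A) \<subseteq> d_ele D \<and> rg_ok (d_rg D A))
     \<and> acyclic (sub_rel D)
     \<and> (\<forall>A \<in> d_ele D. le_D D (d_rt D) A)"

text \<open>Nodes are natural numbers (an unbounded supply of node identities).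
  The string-value function is total, but only its values at str-labelled nodes matter.\<close>
record 'l xtree =
  tnodes :: "nat set"
  tedges :: "(nat \<times> nat) set"
  tlab   :: "nat \<Rightarrow> 'l lab"
  troot  :: nat
  tval   :: "nat \<Rightarrow> string"

definition is_tree :: "'l xtree \<Rightarrow> bool" where
  "is_tree t \<longleftrightarrow> finite (tnodes t) \<and> troot t \<in> tnodes t
     \<and> tedges t \<subseteq> tnodes t \<times> tnodes t
     \<and> (\<forall>p. (p, troot t) \<notin> tedges t)
     \<and> (\<forall>n \<in> tnodes t. n \<noteq> troot t \<longrightarrow> (\<exists>!p. (p, n) \<in> tedges t))
     \<and> (\<forall>n \<in> tnodes t. (troot t, n) \<in> (tedges t)\<^sup>*)"

definition children :: "'l xtree \<Rightarrow> nat \<Rightarrow> nat set" where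
  "children t n = {c. (n, c) \<in> tedges t}"

text \<open>Multiset of labels of the children of a node (the tree is unordered).\<close>
definition child_labels :: "'l xtree \<Rightarrow> nat \<Rightarrow> 'l lab multiset" where
  "child_labels t n = image_mset (tlab t) (mset_set (children t n))"

text \<open>A multiset of labels can be listed as a word of the language of the content model.\<close>
fun word_ok :: "'l rg \<Rightarrow> 'l lab multiset \<Rightarrow> bool" where
  "word_ok RStr M = (M = {#Str#})"
| "word_ok REps M = (M = {#})"
| "word_ok (RConc Bs) M = (M = mset (map Elem Bs))"
| "word_ok (RDisj Bs) M = (\<exists>B \<in> set Bs. M = {#Elem B#})"
| "word_ok (RStar B) M = (set_mset M \<subseteq> {Elem B})"

definition conforms :: "'l dtd \<Rightarrow> 'l \<Rightarrow> 'l xtree \<Rightarrow> bool" where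
  "conforms D A t \<longleftrightarrow> tlab t (troot t) = Elem A
     \<and> (\<forall>n \<in> tnodes t. \<forall>B. tlab t n = Elem B \<longrightarrow> B \<in> d_ele D)
     \<and> (\<forall>n \<in> tnodes t. \<forall>B. tlab t n = Elem B \<longrightarrow> word_ok (d_rg D B) (child_labels t n))
     \<and> (\<forall>n \<in> tnodes t. tlab t n = Str \<longrightarrow> children t n = {})"

definition I_D :: "'l dtd \<Rightarrow> 'l \<Rightarrow> 'l xtree set" where
  "I_D D A = {t. is_tree t \<and> conforms D A t}"

definition iso :: "'l xtree \<Rightarrow> 'l xtree \<Rightarrow> bool" where
  "iso t1 t2 \<longleftrightarrow> (\<exists>f. bij_betw f (tnodes t1) (tnodes t2) \<and> f (troot t1) = troot t2
     \<and> (\<forall>x \<in> tnodes t1. \<forall>y \<in> tnodes t1. (x, y) \<in> tedges t1 \<longleftrightarrow> (f x, f y) \<in> tedges t2)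
     \<and> (\<forall>x \<in> tnodes t1. tlab t2 (f x) = tlab t1 x)
     \<and> (\<forall>x \<in> tnodes t1. tlab t1 x = Str \<longrightarrow> tval t2 (f x) = tval t1 x))"

datatype 'l upd =
    Insert nat "'l xtree"
  | Delete nat
  | ReplaceT nat "'l xtree"
  | ReplaceS nat string

definition ins_tree :: "'l xtree \<Rightarrow> nat \<Rightarrow> 'l xtree \<Rightarrow> 'l xtree" where
  "ins_tree t n t' = \<lparr> tnodes = tnodes t \<union> tnodes t',
     tedges = tedges t \<union> tedges t' \<union> {(n, troot t')},
     tlab = (\<lambda>x. if x \<in> tnodes t' then tlab t' x else tlab t x),
     troot = troot t,
     tval = (\<lambda>x. if x \<in> tnodes t' then tval t' x else tval t x) \<rparr>"

definition del_tree :: "'l xtree \<Rightarrow> nat \<Rightarrow> 'l xtree" where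
  "del_tree t n = (let K = tnodes t - {m. (n, m) \<in> (tedges t)\<^sup>*} in
     t\<lparr> tnodes := K, tedges := tedges t \<inter> (K \<times> K) \<rparr>)"

definition parent :: "'l xtree \<Rightarrow> nat \<Rightarrow> nat" where
  "parent t n = (THE p. (p, n) \<in> tedges t)"

fun apply_upd :: "'l upd \<Rightarrow> 'l xtree \<Rightarrow> 'l xtree" where
  "apply_upd (Insert n t') t = ins_tree t n t'"
| "apply_upd (Delete n) t = del_tree t n"
| "apply_upd (ReplaceT n t') t = ins_tree (del_tree t n) (parent t n) t'"
| "apply_upd (ReplaceS n s) t = t\<lparr> tval := (tval t)(n := s) \<rparr>"

fun valid_upd :: "'l upd \<Rightarrow> 'l xtree \<Rightarrow> bool" where
  "valid_upd (Insert n t') t = (n \<in> tnodes t \<and> tnodes t' \<inter> tnodes t = {})"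
| "valid_upd (Delete n) t = (n \<in> tnodes t)"
| "valid_upd (ReplaceT n t') t = (n \<in> tnodes t \<and> tnodes t' \<inter> tnodes t = {})"
| "valid_upd (ReplaceS n s) t = (n \<in> tnodes t)"

text \<open>UIns A B = (A, insert(B)); UDel A B = (A, delete(B));
  URep A B B' = (A, replace(B,B')); URepStr A = (A, replace(str,str)).\<close>
datatype 'l uat = UIns 'l 'l | UDel 'l 'l | URep 'l 'l 'l | URepStr 'l

fun uat_elem :: "'l uat \<Rightarrow> 'l" where
  "uat_elem (UIns A B) = A"
| "uat_elem (UDel A B) = A"
| "uat_elem (URep A B B') = A"
| "uat_elem (URepStr A) = A"

fun valid_uat :: "'l dtd \<Rightarrow> 'l uat \<Rightarrow> bool" where
  "valid_uat D (UIns A B) = (A \<in> d_ele D \<and> d_rg D A = RStar B)"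
| "valid_uat D (UDel A B) = (A \<in> d_ele D \<and> d_rg D A = RStar B)"
| "valid_uat D (URep A B B') = (A \<in> d_ele D \<and> B \<noteq> B'
     \<and> (\<exists>Bs. d_rg D A = RDisj Bs \<and> B \<in> set Bs \<and> B' \<in> set Bs))"
| "valid_uat D (URepStr A) = (A \<in> d_ele D \<and> d_rg D A = RStr)"

definition valid_set :: "'l dtd \<Rightarrow> 'l uat set" where
  "valid_set D = {u. valid_uat D u}"

definition parent_labelled :: "'l xtree \<Rightarrow> nat \<Rightarrow> 'l \<Rightarrow> bool" where
  "parent_labelled t n A \<longleftrightarrow> (\<exists>p. (p, n) \<in> tedges t \<and> tlab t p = Elem A)"

fun matches :: "'l dtd \<Rightarrow> 'l xtree \<Rightarrow> 'l upd \<Rightarrow> 'l uat \<Rightarrow> bool" where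
  "matches D t (Insert n t') (UIns A B) = (tlab t n = Elem A \<and> t' \<in> I_D D B)"
| "matches D t (Delete n) (UDel A B) = (tlab t n = Elem B \<and> parent_labelled t n A)"
| "matches D t (ReplaceT n t') (URep A B B') =
     (tlab t n = Elem B \<and> parent_labelled t n A \<and> t' \<in> I_D D B' \<and> B \<noteq> B')"
| "matches D t (ReplaceS n s) (URepStr A) = (tlab t n = Str \<and> parent_labelled t n A)"
| "matches D t _ _ = False"

definition sem_uats :: "'l dtd \<Rightarrow> 'l uat set \<Rightarrow> 'l xtree \<Rightarrow> 'l upd set" where
  "sem_uats D S t = {op. \<exists>u \<in> S. matches D t op u}"

fun apply_seq :: "'l upd list \<Rightarrow> 'l xtree \<Rightarrow> 'l xtree" where
  "apply_seq [] t = t"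
| "apply_seq (op # ops) t = apply_seq ops (apply_upd op t)"

fun allowed :: "'l dtd \<Rightarrow> 'l uat set \<Rightarrow> 'l xtree \<Rightarrow> 'l upd list \<Rightarrow> bool" where
  "allowed D S t [] = True"
| "allowed D S t (op # ops) =
     (valid_upd op t \<and> op \<in> sem_uats D S t \<and> allowed D S (apply_upd op t) ops)"

definition policy :: "'l dtd \<Rightarrow> 'l uat set \<Rightarrow> 'l uat set \<Rightarrow> bool" where
  "policy D AA FF \<longleftrightarrow> AA \<subseteq> valid_set D \<and> FF \<subseteq> valid_set D \<and> AA \<inter> FF = {}"

definition consistent :: "'l dtd \<Rightarrow> 'l uat set \<Rightarrow> 'l uat set \<Rightarrow> bool" where
  "consistent D AA FF \<longleftrightarrow> \<not> (\<exists>t ops op0. t \<in> I_D D (d_rt D) \<and> ops \<noteq> []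
      \<and> allowed D AA t ops
      \<and> op0 \<in> sem_uats D FF t \<and> valid_upd op0 t \<and> \<not> iso (apply_upd op0 t) t
      \<and> iso (apply_seq ops t) (apply_upd op0 t))"

definition nothing_forbidden_below :: "'l dtd \<Rightarrow> 'l uat set \<Rightarrow> 'l \<Rightarrow> bool" where
  "nothing_forbidden_below D FF B \<longleftrightarrow> (\<forall>u \<in> FF. \<not> le_D D B (uat_elem u))"

definition replace_graph :: "'l dtd \<Rightarrow> 'l uat set \<Rightarrow> 'l \<Rightarrow> ('l \<times> 'l) set" where
  "replace_graph D AA A = {(X, Y). X \<in> subs (d_rg D A) \<and> Y \<in> subs (d_rg D A) \<and> URep A X Y \<in> AA}"

definition forbidden_edges :: "'l uat set \<Rightarrow> 'l \<Rightarrow> ('l \<times> 'l) set" where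
  "forbidden_edges FF A = {(X, Y). URep A X Y \<in> FF}"

end

theory Submission
  imports Defs
begin

text \<open>
  If: we introduce a simulation preorder \<open>sim\<close> between nodes of conforming trees.  Related nodes
  carry the same label and string value, and their children correspond as the allowed update types
  at that label permit: injectively when only insertion (deletion) is allowed, bijectively up to
  replace-graph paths below a disjunction, and so on.  The relation is transitive, contains
  isomorphisms, and is preserved by every allowed update, since each update is a local change at
  one node.  A non-trivial forbidden update breaks it at the changed node, and by (1) and (3) the
  failure propagates to the root: at each ancestor the other children are unchanged, so following
  the orbit of the changed child under a permutation of the children transfers the simulation
  downwards.  Hence no allowed sequence reaches an isomorphic copy of a forbidden result.

  Only if: documents with fresh nodes exist for every type; a forbidden update with a visible
  effect (a change of a node count, an isomorphism invariant) exists in documents of every type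
  above its element type and survives embedding into a root document.  It is then imitated by
  allowed updates: deletion and re-insertion for (1), the replace-graph path for (2), and a round
  trip along the cycle for (3).
\<close>

lemma is_treeD:
  assumes "is_tree t"
  shows "finite (tnodes t)" "troot t \<in> tnodes t" "tedges t \<subseteq> tnodes t \<times> tnodes t"
    "\<And>p. (p, troot t) \<notin> tedges t"
    "\<And>n. n \<in> tnodes t \<Longrightarrow> n \<noteq> troot t \<Longrightarrow> \<exists>!p. (p, n) \<in> tedges t"
    "\<And>n. n \<in> tnodes t \<Longrightarrow> (troot t, n) \<in> (tedges t)\<^sup>*"
  using assms unfolding is_tree_def by auto

lemma edge_nodes: "is_tree t \<Longrightarrow> (a, b) \<in> tedges t \<Longrightarrow> a \<in> tnodes t \<and> b \<in> tnodes t"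
  unfolding is_tree_def by auto

lemma uniq_parent: "is_tree t \<Longrightarrow> (p, n) \<in> tedges t \<Longrightarrow> (p', n) \<in> tedges t \<Longrightarrow> p = p'"
  unfolding is_tree_def by (metis edge_nodes[unfolded is_tree_def] SigmaD2 subsetD)

lemma children_sub: "is_tree t \<Longrightarrow> children t n \<subseteq> tnodes t"
  unfolding children_def using edge_nodes by fastforce

lemma finite_children: "is_tree t \<Longrightarrow> finite (children t n)"
  using children_sub is_treeD(1) finite_subset by metis

lemma parent_eq: "is_tree t \<Longrightarrow> (p, n) \<in> tedges t \<Longrightarrow> parent t n = p"
  unfolding parent_def using uniq_parent by blast

lemma mem_child_labels: "is_tree t \<Longrightarrow> c \<in> children t n \<Longrightarrow> tlab t c \<in># child_labels t n"
  unfolding child_labels_def using finite_children by fastforce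

lemma ancestors_linear:
  assumes tr: "is_tree t" and a: "(a, m) \<in> (tedges t)\<^sup>*"
  shows "(b, m) \<in> (tedges t)\<^sup>* \<Longrightarrow> (a, b) \<in> (tedges t)\<^sup>* \<or> (b, a) \<in> (tedges t)\<^sup>*"
  using a
proof (induction arbitrary: b rule: rtrancl_induct)
  case base then show ?case by simp
next
  case (step m' m)
  from step.prems show ?case
  proof (cases rule: rtranclE)
    case base then show ?thesis using step.hyps by (meson rtrancl.rtrancl_into_rtrancl)
  next
    case (step m'')
    then have "m'' = m'" using uniq_parent[OF tr] \<open>(m', m) \<in> tedges t\<close> by blast
    then show ?thesis using step.IH step(1) by blast
  qed
qed

text \<open>Local conformance of a single node; a conforming tree is a tree all of whose nodes conform.
  This is the invariant preserved by all updates that match a valid update access type.\<close>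
definition conforms_at :: "'l dtd \<Rightarrow> 'l xtree \<Rightarrow> nat \<Rightarrow> bool" where
  "conforms_at D t n \<longleftrightarrow> (\<forall>B. tlab t n = Elem B \<longrightarrow> B \<in> d_ele D \<and> word_ok (d_rg D B) (child_labels t n))
     \<and> (tlab t n = Str \<longrightarrow> children t n = {})"

definition conforming :: "'l dtd \<Rightarrow> 'l xtree \<Rightarrow> bool" where
  "conforming D t \<longleftrightarrow> is_tree t \<and> (\<forall>n\<in>tnodes t. conforms_at D t n)"

lemma I_D_iff: "t \<in> I_D D A \<longleftrightarrow> conforming D t \<and> tlab t (troot t) = Elem A"
  unfolding I_D_def conforming_def conforms_def conforms_at_def children_def by auto

lemma conformingD: "conforming D t \<Longrightarrow> is_tree t"
  "conforming D t \<Longrightarrow> n \<in> tnodes t \<Longrightarrow> conforms_at D t n"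
  unfolding conforming_def by auto

lemma I_D_tree: "s \<in> I_D D A \<Longrightarrow> is_tree s" unfolding I_D_iff conforming_def by simp
lemma I_D_conforming: "s \<in> I_D D A \<Longrightarrow> conforming D s" unfolding I_D_iff by simp
lemma I_D_lab: "s \<in> I_D D A \<Longrightarrow> tlab s (troot s) = Elem A" unfolding I_D_iff by simp
lemma I_D_finite: "s \<in> I_D D A \<Longrightarrow> finite (tnodes s)" by (rule is_treeD(1)[OF I_D_tree])

text \<open>Only string values change under a string replacement; conformance does not see them.\<close>
lemma conforming_tval_upd: "conforming D (t\<lparr>tval := v\<rparr>) = conforming D t"
  unfolding conforming_def is_tree_def conforms_at_def child_labels_def children_def by simp

lemma child_label_cases:
  assumes "is_tree t" "conforms_at D t n" "c \<in> children t n"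
  shows "tlab t n \<noteq> Str \<and> (\<forall>A. tlab t n = Elem A \<longrightarrow>
      (tlab t c = Str \<and> d_rg D A = RStr) \<or> (\<exists>B. tlab t c = Elem B \<and> B \<in> subs (d_rg D A)))"
proof -
  have m: "tlab t c \<in># child_labels t n" using mem_child_labels assms by metis
  have "tlab t n \<noteq> Str" using assms unfolding conforms_at_def by auto
  moreover
  { fix A assume "tlab t n = Elem A"
    then have wo: "word_ok (d_rg D A) (child_labels t n)" using assms(2) unfolding conforms_at_def by auto
    have "(tlab t c = Str \<and> d_rg D A = RStr) \<or> (\<exists>B. tlab t c = Elem B \<and> B \<in> subs (d_rg D A))"
      by (cases "d_rg D A") (use wo m in \<open>auto dest!: subsetD[of _ _ "tlab t c"]\<close>) }
  ultimately show ?thesis by blast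
qed

lemma single_child:
  assumes cf: "conforms_at D t p" and l: "tlab t p = Elem A"
    and rg: "d_rg D A = RDisj Bs \<or> d_rg D A = RStr"
  shows "\<exists>c. children t p = {c}"
proof -
  have "word_ok (d_rg D A) (child_labels t p)" using cf l unfolding conforms_at_def by auto
  then obtain L where "child_labels t p = {#L#}" using rg by auto
  then have "card (children t p) = 1" unfolding child_labels_def
    by (metis size_image_mset size_mset_set size_single)
  then show ?thesis by (metis card_1_singletonE)
qed

lemma children_disj:
  assumes cf: "conforms_at D t p" and l: "tlab t p = Elem A" and rg: "d_rg D A = RDisj Bs"
    and n: "n \<in> children t p"
  shows "children t p = {n}"
  using single_child[OF cf l disjI1[OF rg]] n by auto

lemma children_str:
  assumes tr: "is_tree t" and cf: "conforms_at D t p" and l: "tlab t p = Elem A" and rg: "d_rg D A = RStr"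
    and n: "n \<in> children t p"
  shows "children t p = {n} \<and> tlab t n = Str"
proof -
  have cp: "children t p = {n}" using single_child[OF cf l disjI2[OF rg]] n by auto
  have "child_labels t p = {#Str#}" using cf l rg unfolding conforms_at_def by simp
  then show ?thesis using cp mem_child_labels[OF tr n] by simp
qed

lemma sub_rel_sub: "wf_dtd D \<Longrightarrow> sub_rel D \<subseteq> d_ele D \<times> d_ele D"
  unfolding wf_dtd_def sub_rel_def by auto

lemma sub_rel_I: "A \<in> d_ele D \<Longrightarrow> B \<in> subs (d_rg D A) \<Longrightarrow> (A, B) \<in> sub_rel D"
  unfolding sub_rel_def by auto

lemma subs_ele: "wf_dtd D \<Longrightarrow> A \<in> d_ele D \<Longrightarrow> B \<in> subs (d_rg D A) \<Longrightarrow> B \<in> d_ele D"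
  unfolding wf_dtd_def by blast

text \<open>The rank of a label bounds the depth of any conforming tree below it: strings have rank 0,
  and an element type has rank one more than the number of its proper descendant types.\<close>
definition rank :: "'l dtd \<Rightarrow> 'l lab \<Rightarrow> nat" where
  "rank D L = (case L of Str \<Rightarrow> 0 | Elem A \<Rightarrow> Suc (card {B. (A, B) \<in> (sub_rel D)\<^sup>+}))"

lemma rank_sub_rel:
  assumes w: "wf_dtd D" and ab: "(A, B) \<in> sub_rel D"
  shows "rank D (Elem B) < rank D (Elem A)"
proof -
  let ?r = "sub_rel D"
  have "{C. (A, C) \<in> ?r\<^sup>+} \<subseteq> Range ?r" by (auto elim: tranclE)
  also have "\<dots> \<subseteq> d_ele D" using sub_rel_sub[OF w] by blast
  finally have fin: "finite {C. (A, C) \<in> ?r\<^sup>+}"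
    using w finite_subset unfolding wf_dtd_def by blast
  have "B \<in> {C. (A, C) \<in> ?r\<^sup>+}" using ab by auto
  moreover have "B \<notin> {C. (B, C) \<in> ?r\<^sup>+}" using w unfolding wf_dtd_def acyclic_def by auto
  moreover have "{C. (B, C) \<in> ?r\<^sup>+} \<subseteq> {C. (A, C) \<in> ?r\<^sup>+}" using ab by auto
  ultimately have "{C. (B, C) \<in> ?r\<^sup>+} \<subset> {C. (A, C) \<in> ?r\<^sup>+}" by blast
  then have "card {C. (B, C) \<in> ?r\<^sup>+} < card {C. (A, C) \<in> ?r\<^sup>+}"
    using fin psubset_card_mono by blast
  then show ?thesis unfolding rank_def by simp
qed

lemma edge_sub_rel:
  assumes o: "conforming D t" and e: "(n, c) \<in> tedges t"
  obtains A where "tlab t n = Elem A" "A \<in> d_ele D"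
    "tlab t c = Str \<or> (\<exists>B. tlab t c = Elem B \<and> (A, B) \<in> sub_rel D)"
proof -
  have tr: "is_tree t" using o conformingD by auto
  have n: "n \<in> tnodes t" using edge_nodes[OF tr e] by auto
  have ch: "c \<in> children t n" using e unfolding children_def by auto
  from child_label_cases[OF tr conformingD(2)[OF o n] ch] obtain A where a: "tlab t n = Elem A"
    and cs: "(tlab t c = Str \<and> d_rg D A = RStr) \<or> (\<exists>B. tlab t c = Elem B \<and> B \<in> subs (d_rg D A))"
    by (cases "tlab t n") auto
  have A: "A \<in> d_ele D" using conformingD(2)[OF o n] a unfolding conforms_at_def by auto
  show ?thesis using that[OF a A] cs sub_rel_I[OF A] by blast
qed

lemma edge_rank:
  assumes w: "wf_dtd D" and o: "conforming D t" and e: "(n, c) \<in> tedges t"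
  shows "rank D (tlab t c) < rank D (tlab t n)"
proof -
  obtain A where A: "tlab t n = Elem A"
    and c: "tlab t c = Str \<or> (\<exists>B. tlab t c = Elem B \<and> (A, B) \<in> sub_rel D)"
    using edge_sub_rel[OF o e] by metis
  show ?thesis using c
  proof
    assume "tlab t c = Str" then show ?thesis using A unfolding rank_def by simp
  qed (use A rank_sub_rel[OF w] in auto)
qed

lemma no_cycle:
  assumes w: "wf_dtd D" and o: "conforming D t"
  shows "(n, n) \<notin> (tedges t)\<^sup>+"
proof -
  have "rank D (tlab t c) < rank D (tlab t m)" if "(m, c) \<in> (tedges t)\<^sup>+" for m c
    using that by (induction rule: trancl_induct) (use edge_rank[OF w o] less_trans in blast)+
  then show ?thesis by blast
qed

lemma path_le:
  assumes o: "conforming D t" and p: "(n, z) \<in> (tedges t)\<^sup>*"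
    and ln: "tlab t n = Elem X" and lz: "tlab t z = Elem Z"
  shows "le_D D X Z"
  using p lz
proof (induction arbitrary: Z rule: rtrancl_induct)
  case base then show ?case using ln unfolding le_D_def by auto
next
  case (step y z)
  obtain Y where "tlab t y = Elem Y" "(Y, Z) \<in> sub_rel D"
    using edge_sub_rel[OF o step.hyps(2)] step.prems by auto
  with step.IH show ?case unfolding le_D_def by auto
qed

lemma labels_ge:
  assumes e: "e \<in> I_D D Z" and x: "x \<in> tnodes e" and l: "tlab e x = Elem W"
  shows "le_D D Z W"
  using path_le[OF I_D_conforming[OF e] is_treeD(6)[OF I_D_tree[OF e] x] I_D_lab[OF e] l] .

lemma le_D_antisym:
  assumes w: "wf_dtd D" and "le_D D X Y" "le_D D Y X"
  shows "X = Y"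
proof (rule ccontr)
  assume ne: "X \<noteq> Y"
  have "(X, Y) \<in> (sub_rel D)\<^sup>+" using assms(2) ne unfolding le_D_def by (simp add: rtrancl_eq_or_trancl)
  moreover have "(Y, X) \<in> (sub_rel D)\<^sup>*" using assms(3) unfolding le_D_def by simp
  ultimately have "(X, X) \<in> (sub_rel D)\<^sup>+" by simp
  then show False using w unfolding wf_dtd_def acyclic_def by blast
qed

locale insertion =
  fixes t s :: "'l xtree" and q :: nat
  assumes tt: "is_tree t" and ts: "is_tree s" and q: "q \<in> tnodes t"
    and disj: "tnodes s \<inter> tnodes t = {}"
begin

abbreviation "t' \<equiv> ins_tree t q s"

lemma simps: "tnodes t' = tnodes t \<union> tnodes s" "troot t' = troot t"
  "tedges t' = tedges t \<union> tedges s \<union> {(q, troot s)}"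
  "x \<in> tnodes s \<Longrightarrow> tlab t' x = tlab s x" "x \<notin> tnodes s \<Longrightarrow> tlab t' x = tlab t x"
  "x \<in> tnodes s \<Longrightarrow> tval t' x = tval s x" "x \<notin> tnodes s \<Longrightarrow> tval t' x = tval t x"
  unfolding ins_tree_def by auto

lemma lab_t: "x \<in> tnodes t \<Longrightarrow> tlab t' x = tlab t x" using disj simps(5) by blast
lemma val_t: "x \<in> tnodes t \<Longrightarrow> tval t' x = tval t x" using disj simps(7) by blast

lemma rs: "troot s \<in> tnodes s" "troot s \<notin> tnodes t" using is_treeD(2)[OF ts] disj by auto

lemma children_t: "x \<in> tnodes t \<Longrightarrow> children t' x = children t x \<union> (if x = q then {troot s} else {})"
  unfolding children_def simps using edge_nodes[OF ts] disj by auto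

lemma children_s: "x \<in> tnodes s \<Longrightarrow> children t' x = children s x"
  unfolding children_def simps using edge_nodes[OF tt] disj q by auto

lemma edge_into:
  "(p, m) \<in> tedges t' \<longleftrightarrow> (p, m) \<in> tedges t \<or> (p, m) \<in> tedges s \<or> (p = q \<and> m = troot s)"
  using simps(3) by auto

lemma unique_parent: "m \<in> tnodes t' \<Longrightarrow> m \<noteq> troot t' \<Longrightarrow> \<exists>!p. (p, m) \<in> tedges t'"
proof -
  assume m: "m \<in> tnodes t'" "m \<noteq> troot t'"
  have not_t: "(p, m) \<notin> tedges t" if "m \<notin> tnodes t" for p using that edge_nodes[OF tt] by blast
  have not_s: "(p, m) \<notin> tedges s" if "m \<notin> tnodes s \<or> m = troot s" for p
    using that edge_nodes[OF ts] is_treeD(4)[OF ts] by blast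
  consider "m \<in> tnodes t" | "m = troot s" | "m \<in> tnodes s" "m \<noteq> troot s"
    using m(1) simps(1) by blast
  then show ?thesis
  proof cases
    case 1
    then have "m \<notin> tnodes s" "m \<noteq> troot s" using disj rs by auto
    then show ?thesis using is_treeD(5)[OF tt 1] m(2) not_s unfolding edge_into simps(2) by metis
  next
    case 2
    then show ?thesis using not_s not_t rs(2) unfolding edge_into by blast
  next
    case 3
    then have "m \<notin> tnodes t" using disj by blast
    then show ?thesis using is_treeD(5)[OF ts 3] not_t unfolding edge_into using 3(2) by metis
  qed
qed

lemma reach: "m \<in> tnodes t' \<Longrightarrow> (troot t', m) \<in> (tedges t')\<^sup>*"
proof -
  assume m: "m \<in> tnodes t'"
  have mono: "(tedges t)\<^sup>* \<subseteq> (tedges t')\<^sup>*" "(tedges s)\<^sup>* \<subseteq> (tedges t')\<^sup>*"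
    by (auto intro!: rtrancl_mono simp: simps)
  show "(troot t', m) \<in> (tedges t')\<^sup>*"
  proof (cases "m \<in> tnodes t")
    case True then show ?thesis using is_treeD(6)[OF tt] mono simps by auto
  next
    case False
    then have ms: "m \<in> tnodes s" using m simps by auto
    have "(troot t, q) \<in> (tedges t')\<^sup>*" using is_treeD(6)[OF tt q] mono by auto
    moreover have "(q, troot s) \<in> (tedges t')\<^sup>*" using simps by auto
    moreover have "(troot s, m) \<in> (tedges t')\<^sup>*" using is_treeD(6)[OF ts ms] mono by auto
    ultimately show ?thesis using simps(2) by (metis rtrancl_trans)
  qed
qed

lemma is_tree: "is_tree t'"
proof -
  have "finite (tnodes t')" using is_treeD(1)[OF tt] is_treeD(1)[OF ts] simps by auto
  moreover have "troot t' \<in> tnodes t'" using is_treeD(2)[OF tt] simps by auto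
  moreover have "tedges t' \<subseteq> tnodes t' \<times> tnodes t'"
    using is_treeD(3)[OF tt] is_treeD(3)[OF ts] q rs simps by auto
  moreover have "(p, troot t') \<notin> tedges t'" for p
    using is_treeD(2,4)[OF tt] disj rs unfolding edge_into simps(2) by (auto dest: edge_nodes[OF ts])
  ultimately show ?thesis unfolding is_tree_def using unique_parent reach by blast
qed

lemma child_labels_t: "x \<in> tnodes t \<Longrightarrow>
  child_labels t' x = child_labels t x + (if x = q then {#tlab s (troot s)#} else {#})"
proof -
  assume x: "x \<in> tnodes t"
  have cs: "children t x \<subseteq> tnodes t" using children_sub[OF tt] .
  have fc: "finite (children t x)" using finite_children[OF tt] .
  have "image_mset (tlab t') (mset_set (children t x)) = image_mset (tlab t) (mset_set (children t x))"
    using cs lab_t by (intro image_mset_cong) (auto simp: fc)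
  moreover have "troot s \<notin> children t x" using cs rs by auto
  ultimately show ?thesis unfolding child_labels_def children_t[OF x] using fc simps rs
    by (auto simp: mset_set.insert_remove)
qed

lemma child_labels_s: "x \<in> tnodes s \<Longrightarrow> child_labels t' x = child_labels s x"
  unfolding child_labels_def children_s
  using children_sub[OF ts] simps(4) by (intro image_mset_cong) (auto simp: finite_children[OF ts])

lemma conf_t: "x \<in> tnodes t \<Longrightarrow> x \<noteq> q \<Longrightarrow> conforms_at D t' x = conforms_at D t x"
  unfolding conforms_at_def by (simp add: child_labels_t children_t lab_t)

lemma conf_s: "x \<in> tnodes s \<Longrightarrow> conforms_at D t' x = conforms_at D s x"
  unfolding conforms_at_def using child_labels_s children_s simps by auto

lemma conforming:
  assumes "\<forall>x\<in>tnodes t. x \<noteq> q \<longrightarrow> conforms_at D t x" and "\<forall>x\<in>tnodes s. conforms_at D s x"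
    and "conforms_at D t' q"
  shows "conforming D t'"
  unfolding conforming_def
proof (intro conjI ballI)
  fix x assume "x \<in> tnodes t'"
  then show "conforms_at D t' x" using simps(1) conf_t conf_s assms by (cases "x = q") auto
qed (rule is_tree)

end

locale deletion =
  fixes t :: "'l xtree" and n :: nat
  assumes tt: "is_tree t" and n: "n \<in> tnodes t" and nr: "n \<noteq> troot t"
begin

definition "subtree = {m. (n, m) \<in> (tedges t)\<^sup>*}"
definition "kept = tnodes t - subtree"

abbreviation "t' \<equiv> del_tree t n"

lemma simps: "tnodes t' = kept" "tedges t' = tedges t \<inter> (kept \<times> kept)" "troot t' = troot t"
  "tlab t' = tlab t" "tval t' = tval t"
  unfolding del_tree_def kept_def subtree_def Let_def by auto

lemma kept_sub: "kept \<subseteq> tnodes t" unfolding kept_def by auto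

lemma n_not_kept: "n \<notin> kept" unfolding kept_def subtree_def by auto

lemma subtree_step: "(x, c) \<in> tedges t \<Longrightarrow> x \<in> subtree \<Longrightarrow> c \<in> subtree"
  unfolding subtree_def by (auto intro: rtrancl_into_rtrancl)

lemma parent_kept: "(p, m) \<in> tedges t \<Longrightarrow> m \<in> kept \<Longrightarrow> p \<in> kept"
  using subtree_step edge_nodes[OF tt] unfolding kept_def by blast

lemma root_kept: "troot t \<in> kept"
proof -
  have "(n, troot t) \<notin> (tedges t)\<^sup>*"
  proof
    assume "(n, troot t) \<in> (tedges t)\<^sup>*"
    then have "(n, troot t) \<in> (tedges t)\<^sup>+" using nr by (simp add: rtrancl_eq_or_trancl)
    then obtain y where "(y, troot t) \<in> tedges t" by (meson tranclE)
    then show False using is_treeD(4)[OF tt] by blast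
  qed
  then show ?thesis using is_treeD(2)[OF tt] unfolding kept_def subtree_def by auto
qed

lemma child_subtree: "x \<in> kept \<Longrightarrow> (x, c) \<in> tedges t \<Longrightarrow> c \<in> subtree \<Longrightarrow> c = n"
proof (rule ccontr)
  assume x: "x \<in> kept" and e: "(x, c) \<in> tedges t" and c: "c \<in> subtree" and "c \<noteq> n"
  then have "(n, c) \<in> (tedges t)\<^sup>+" unfolding subtree_def by (simp add: rtrancl_eq_or_trancl)
  then obtain y where y: "(n, y) \<in> (tedges t)\<^sup>*" "(y, c) \<in> tedges t" using tranclD2 by metis
  then have "y = x" using uniq_parent[OF tt e] by metis
  then show False using y x unfolding kept_def subtree_def by auto
qed

lemma children_kept: "x \<in> kept \<Longrightarrow> children t' x = children t x - {n}"
proof -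
  assume x: "x \<in> kept"
  have "\<And>c. (x, c) \<in> tedges t \<Longrightarrow> c \<noteq> n \<Longrightarrow> c \<in> kept"
    using child_subtree[OF x] edge_nodes[OF tt] unfolding kept_def by blast
  then show ?thesis unfolding children_def simps using x n_not_kept by auto
qed

lemma reach: "m \<in> kept \<Longrightarrow> (troot t, m) \<in> (tedges t \<inter> kept \<times> kept)\<^sup>*"
proof -
  assume m: "m \<in> kept"
  have "(troot t, m) \<in> (tedges t)\<^sup>*" using is_treeD(6)[OF tt] m kept_sub by blast
  then show ?thesis using m
  proof (induction rule: rtrancl_induct)
    case (step y z)
    then have y: "y \<in> kept" using parent_kept by blast
    then have "(y, z) \<in> tedges t \<inter> kept \<times> kept" using step by simp
    then show ?case using step.IH[OF y] by (rule rtrancl_into_rtrancl[rotated])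
  qed simp
qed

lemma is_tree: "is_tree t'"
proof -
  have up: "\<exists>!p. (p, m) \<in> tedges t \<inter> kept \<times> kept" if m: "m \<in> kept" "m \<noteq> troot t" for m
  proof -
    obtain p where p: "(p, m) \<in> tedges t" using is_treeD(5)[OF tt] m kept_sub by blast
    then have "(p, m) \<in> tedges t \<inter> kept \<times> kept" using parent_kept m by simp
    then show ?thesis using uniq_parent[OF tt] by blast
  qed
  show ?thesis unfolding is_tree_def simps
    using is_treeD(1,4)[OF tt] kept_sub finite_subset root_kept up reach by auto
qed

lemma child_labels_kept: "x \<in> kept \<Longrightarrow>
  child_labels t' x = child_labels t x - (if (x, n) \<in> tedges t then {#tlab t n#} else {#})"
proof -
  assume x: "x \<in> kept"
  have fc: "finite (children t x)" using finite_children[OF tt] .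
  show ?thesis
  proof (cases "(x, n) \<in> tedges t")
    case True
    then have "n \<in> children t x" unfolding children_def by auto
    then show ?thesis unfolding child_labels_def children_kept[OF x] simps using True fc
      by (simp add: mset_set_Diff image_mset_Diff)
  next
    case False
    then have "children t x - {n} = children t x" unfolding children_def by auto
    then show ?thesis unfolding child_labels_def children_kept[OF x] simps using False by simp
  qed
qed

lemma conf_kept: "x \<in> kept \<Longrightarrow> (x, n) \<notin> tedges t \<Longrightarrow> conforms_at D t' x = conforms_at D t x"
  unfolding conforms_at_def using child_labels_kept children_kept simps by (auto simp: children_def)

end

lemma ancestor_kept:
  assumes w: "wf_dtd D" and o: "conforming D t" and e: "(p, n) \<in> tedges t"
    and z: "z \<in> tnodes t" "(z, p) \<in> (tedges t)\<^sup>*"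
  shows "z \<in> tnodes (del_tree t n)"
proof -
  have "(n, z) \<notin> (tedges t)\<^sup>*"
  proof
    assume "(n, z) \<in> (tedges t)\<^sup>*"
    then have "(n, n) \<in> (tedges t)\<^sup>+" using z(2) e by (meson rtrancl_trans rtrancl_into_trancl1)
    then show False using no_cycle[OF w o] by blast
  qed
  then show ?thesis using z(1) unfolding del_tree_def Let_def by simp
qed

lemma insert_conforming:
  assumes o: "conforming D t" and n: "n \<in> tnodes t" and d: "tnodes s \<inter> tnodes t = {}"
    and s: "s \<in> I_D D B" and l: "tlab t n = Elem A" and rg: "d_rg D A = RStar B"
  shows "conforming D (ins_tree t n s)"
proof -
  interpret I: insertion t s n using conformingD(1)[OF o] I_D_tree[OF s] n d by unfold_locales
  have "word_ok (d_rg D A) (child_labels t n)" "A \<in> d_ele D"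
    using conformingD(2)[OF o n] l unfolding conforms_at_def by simp_all
  then have "conforms_at D (ins_tree t n s) n"
    using I.child_labels_t[OF n] I.lab_t[OF n] rg I_D_lab[OF s] l unfolding conforms_at_def by simp
  then show ?thesis
    using I.conforming conformingD(2)[OF o] conformingD(2)[OF I_D_conforming[OF s]] by blast
qed

lemma delete_conforming:
  assumes o: "conforming D t" and e: "(p, n) \<in> tedges t" and l: "tlab t p = Elem A"
    and rg: "d_rg D A = RStar B"
  shows "conforming D (del_tree t n)"
proof -
  have tr: "is_tree t" using conformingD(1)[OF o] .
  interpret Dl: deletion t n using tr edge_nodes[OF tr e] is_treeD(4)[OF tr] e
    by unfold_locales auto
  have "conforms_at D (del_tree t n) x" if x: "x \<in> Dl.kept" for x
  proof (cases "(x, n) \<in> tedges t")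
    case False then show ?thesis using Dl.conf_kept[OF x] conformingD(2)[OF o] x Dl.kept_sub by blast
  next
    case True
    then have xp: "x = p" using uniq_parent[OF tr e] by blast
    have pt: "p \<in> tnodes t" using edge_nodes[OF tr e] by simp
    have "word_ok (RStar B) (child_labels t p)" "A \<in> d_ele D"
      using conformingD(2)[OF o pt] l rg unfolding conforms_at_def by simp_all
    then show ?thesis using Dl.child_labels_kept[OF x] xp l Dl.simps(4) rg
      unfolding conforms_at_def by (auto dest: in_diffD)
  qed
  then show ?thesis unfolding conforming_def using Dl.is_tree Dl.simps(1) by simp
qed

lemma replace_conforming:
  assumes w: "wf_dtd D" and o: "conforming D t" and e: "(p, n) \<in> tedges t" and l: "tlab t p = Elem A"
    and rg: "d_rg D A = RDisj Bs" and B': "B' \<in> set Bs" and s: "s \<in> I_D D B'"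
    and d: "tnodes s \<inter> tnodes t = {}"
  shows "conforming D (ins_tree (del_tree t n) p s)"
proof -
  have tr: "is_tree t" using conformingD(1)[OF o] .
  have pt: "p \<in> tnodes t" using edge_nodes[OF tr e] by simp
  interpret Dl: deletion t n using tr edge_nodes[OF tr e] is_treeD(4)[OF tr] e
    by unfold_locales auto
  have pd: "p \<in> Dl.kept" using ancestor_kept[OF w o e pt] Dl.simps(1) by simp
  interpret I: insertion "del_tree t n" s p
    using Dl.is_tree I_D_tree[OF s] pd d Dl.kept_sub Dl.simps(1) by unfold_locales auto
  have cp: "children t p = {n}"
    using children_disj[OF conformingD(2)[OF o pt] l rg] e unfolding children_def by simp
  have "child_labels t p = {#tlab t n#}" unfolding child_labels_def cp by simp
  then have "child_labels (ins_tree (del_tree t n) p s) p = {#Elem B'#}"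
    using I.child_labels_t pd Dl.child_labels_kept[OF pd] e I_D_lab[OF s] Dl.simps(1) by simp
  moreover have "A \<in> d_ele D" using conformingD(2)[OF o pt] l unfolding conforms_at_def by simp
  ultimately have "conforms_at D (ins_tree (del_tree t n) p s) p"
    using I.lab_t pd l Dl.simps(1,4) rg B' unfolding conforms_at_def by auto
  moreover have "conforms_at D (del_tree t n) x" if "x \<in> Dl.kept" "x \<noteq> p" for x
    using that Dl.conf_kept uniq_parent[OF tr _ e] conformingD(2)[OF o] Dl.kept_sub by blast
  ultimately show ?thesis
    using I.conforming conformingD(2)[OF I_D_conforming[OF s]] Dl.simps(1) by blast
qed

text \<open>Every atomic update is
  such a local change, at the parent of the updated node (insertion: at the node itself).\<close>
definition local_change :: "'l xtree \<Rightarrow> 'l xtree \<Rightarrow> nat \<Rightarrow> nat set \<Rightarrow> bool" where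
  "local_change t t' m C \<longleftrightarrow> troot t' = troot t \<and> m \<in> tnodes t \<and> m \<in> tnodes t' \<and> C \<subseteq> children t m
     \<and> (\<forall>z \<in> tnodes t \<inter> tnodes t'. tlab t' z = tlab t z \<and> (z \<notin> C \<longrightarrow> tval t' z = tval t z)
           \<and> (z \<noteq> m \<longrightarrow> children t' z = children t z))
     \<and> (\<forall>z \<in> tnodes t. (z, m) \<in> (tedges t)\<^sup>* \<longrightarrow> z \<in> tnodes t')"

lemma local_changeD:
  assumes "local_change t t' m C"
  shows "troot t' = troot t" "m \<in> tnodes t" "m \<in> tnodes t'" "C \<subseteq> children t m"
    "\<And>z. z \<in> tnodes t \<Longrightarrow> z \<in> tnodes t' \<Longrightarrow> tlab t' z = tlab t z"
    "\<And>z. z \<in> tnodes t \<Longrightarrow> z \<in> tnodes t' \<Longrightarrow> z \<notin> C \<Longrightarrow> tval t' z = tval t z"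
    "\<And>z. z \<in> tnodes t \<Longrightarrow> z \<in> tnodes t' \<Longrightarrow> z \<noteq> m \<Longrightarrow> children t' z = children t z"
    "\<And>z. z \<in> tnodes t \<Longrightarrow> (z, m) \<in> (tedges t)\<^sup>* \<Longrightarrow> z \<in> tnodes t'"
  using assms unfolding local_change_def by blast+

lemma insert_local_change:
  assumes tr: "is_tree t" and ts: "is_tree s" and n: "n \<in> tnodes t" and d: "tnodes s \<inter> tnodes t = {}"
  shows "local_change t (ins_tree t n s) n {}"
proof -
  interpret I: insertion t s n using tr ts n d by unfold_locales
  show ?thesis unfolding local_change_def using I.simps(1,2) I.lab_t I.val_t I.children_t n by auto
qed

lemma delete_local_change:
  assumes w: "wf_dtd D" and o: "conforming D t" and e: "(p, n) \<in> tedges t"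
  shows "local_change t (del_tree t n) p {}"
proof -
  have tr: "is_tree t" using conformingD(1)[OF o] .
  interpret Dl: deletion t n using tr edge_nodes[OF tr e] is_treeD(4)[OF tr] e
    by unfold_locales auto
  have "children (del_tree t n) z = children t z" if "z \<in> Dl.kept" "z \<noteq> p" for z
    using Dl.children_kept[OF that(1)] uniq_parent[OF tr _ e] that(2) unfolding children_def by auto
  then show ?thesis unfolding local_change_def Dl.simps
    using ancestor_kept[OF w o e] Dl.kept_sub edge_nodes[OF tr e] Dl.simps(1) by auto
qed

lemma replace_local_change:
  assumes w: "wf_dtd D" and o: "conforming D t" and e: "(p, n) \<in> tedges t"
    and ts: "is_tree s" and d: "tnodes s \<inter> tnodes t = {}"
  shows "local_change t (ins_tree (del_tree t n) p s) p {}"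
proof -
  have tr: "is_tree t" using conformingD(1)[OF o] .
  have L: "local_change t (del_tree t n) p {}" using delete_local_change[OF w o e] .
  interpret Dl: deletion t n using tr edge_nodes[OF tr e] is_treeD(4)[OF tr] e
    by unfold_locales auto
  interpret I: insertion "del_tree t n" s p
    using Dl.is_tree ts local_changeD(3)[OF L] d Dl.kept_sub Dl.simps(1) by unfold_locales auto
  let ?t' = "ins_tree (del_tree t n) p s"
  have common: "z \<in> tnodes (del_tree t n)" if "z \<in> tnodes t" "z \<in> tnodes ?t'" for z
    using that I.simps(1) d by blast
  have "\<forall>z \<in> tnodes t \<inter> tnodes ?t'. tlab ?t' z = tlab t z \<and> tval ?t' z = tval t z
          \<and> (z \<noteq> p \<longrightarrow> children ?t' z = children t z)"
    using common local_changeD(5,6,7)[OF L] I.lab_t I.val_t I.children_t by auto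
  then show ?thesis using local_changeD(1-4,8)[OF L] I.simps(1,2) unfolding local_change_def
    by auto
qed

lemma replace_str_local_change:
  assumes tr: "is_tree t" and e: "(p, n) \<in> tedges t"
  shows "local_change t (t\<lparr>tval := (tval t)(n := v)\<rparr>) p {n}"
  using edge_nodes[OF tr e] e unfolding local_change_def children_def by auto

definition inj_match :: "('a \<Rightarrow> 'b \<Rightarrow> bool) \<Rightarrow> 'a set \<Rightarrow> 'b set \<Rightarrow> bool" where
  "inj_match R A B \<longleftrightarrow> (\<exists>f. inj_on f A \<and> f ` A \<subseteq> B \<and> (\<forall>a\<in>A. R a (f a)))"

definition bij_match :: "('a \<Rightarrow> 'b \<Rightarrow> bool) \<Rightarrow> 'a set \<Rightarrow> 'b set \<Rightarrow> bool" where
  "bij_match R A B \<longleftrightarrow> (\<exists>f. bij_betw f A B \<and> (\<forall>a\<in>A. R a (f a)))"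

lemma inj_match_mono: "inj_match R A B \<Longrightarrow> (\<And>a b. R a b \<Longrightarrow> S a b) \<Longrightarrow> inj_match S A B"
  unfolding inj_match_def by blast

lemma bij_match_mono: "bij_match R A B \<Longrightarrow> (\<And>a b. R a b \<Longrightarrow> S a b) \<Longrightarrow> bij_match S A B"
  unfolding bij_match_def by blast

lemma inj_match_trans:
  "inj_match R A B \<Longrightarrow> inj_match S B C \<Longrightarrow> (\<And>a b c. R a b \<Longrightarrow> S b c \<Longrightarrow> T a c) \<Longrightarrow> inj_match T A C"
proof -
  assume "inj_match R A B" "inj_match S B C" and RS: "\<And>a b c. R a b \<Longrightarrow> S b c \<Longrightarrow> T a c"
  then obtain f g where f: "inj_on f A" "f ` A \<subseteq> B" "\<forall>a\<in>A. R a (f a)"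
    and g: "inj_on g B" "g ` B \<subseteq> C" "\<forall>b\<in>B. S b (g b)"
    unfolding inj_match_def by blast
  have "inj_on (g \<circ> f) A" using comp_inj_on[OF f(1) inj_on_subset[OF g(1) f(2)]] .
  moreover have "(g \<circ> f) ` A \<subseteq> C" using f(2) g(2) by auto
  moreover have "\<forall>a\<in>A. T a ((g \<circ> f) a)" using f(2,3) g(3) RS by (simp add: image_subset_iff) blast
  ultimately show ?thesis unfolding inj_match_def by blast
qed

lemma bij_match_trans:
  "bij_match R A B \<Longrightarrow> bij_match S B C \<Longrightarrow> (\<And>a b c. R a b \<Longrightarrow> S b c \<Longrightarrow> T a c) \<Longrightarrow> bij_match T A C"
proof -
  assume "bij_match R A B" "bij_match S B C" and RS: "\<And>a b c. R a b \<Longrightarrow> S b c \<Longrightarrow> T a c"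
  then obtain f g where f: "bij_betw f A B" "\<forall>a\<in>A. R a (f a)"
    and g: "bij_betw g B C" "\<forall>b\<in>B. S b (g b)"
    unfolding bij_match_def by blast
  have "\<forall>a\<in>A. T a ((g \<circ> f) a)"
  proof
    fix a assume a: "a \<in> A"
    then have "f a \<in> B" using bij_betwE[OF f(1)] by blast
    then show "T a ((g \<circ> f) a)" using RS f(2) g(2) a by simp blast
  qed
  then show ?thesis using bij_betw_trans[OF f(1) g(1)] unfolding bij_match_def by blast
qed

lemma bij_match_inj_match: "bij_match R A B \<Longrightarrow> inj_match R A B"
  unfolding bij_match_def inj_match_def bij_betw_def by blast

lemma bij_match_flip: "bij_match R A B \<Longrightarrow> bij_match (\<lambda>b a. R a b) B A"
proof -
  assume "bij_match R A B"
  then obtain f where f: "bij_betw f A B" "\<forall>a\<in>A. R a (f a)" unfolding bij_match_def by blast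
  let ?g = "inv_into A f"
  have "R (?g b) b" if b: "b \<in> B" for b
  proof -
    have "?g b \<in> A" using bij_betwE[OF bij_betw_inv_into[OF f(1)]] b by blast
    then have "R (?g b) (f (?g b))" using f(2) by blast
    then show ?thesis using bij_betw_inv_into_right[OF f(1) b] by simp
  qed
  then show ?thesis using bij_betw_inv_into[OF f(1)] unfolding bij_match_def by blast
qed

lemma inj_match_endo: "finite A \<Longrightarrow> inj_match R A A \<Longrightarrow> bij_match R A A"
proof -
  assume fin: "finite A" and "inj_match R A A"
  then obtain f where f: "inj_on f A" "f ` A \<subseteq> A" "\<forall>a\<in>A. R a (f a)"
    unfolding inj_match_def by blast
  then have "f ` A = A" using endo_inj_surj[OF fin] by blast
  then show ?thesis using f unfolding bij_match_def bij_betw_def by blast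
qed

lemma inj_match_card: "inj_match R A B \<Longrightarrow> finite B \<Longrightarrow> card A \<le> card B"
  unfolding inj_match_def using card_inj_on_le by blast

lemma bij_match_card: "bij_match R A B \<Longrightarrow> card A = card B"
  unfolding bij_match_def using bij_betw_same_card by blast

lemma bij_match_singleton: "bij_match R {a} {b} \<longleftrightarrow> R a b"
  unfolding bij_match_def bij_betw_def by auto

section \<open>The simulation preorder\<close>

text \<open>How allowed updates can change the children of a node with a given label:
  arbitrarily (both insertion and deletion allowed), only by adding or only by removing subtrees,
  only in the value of the string child, by replacing the unique child along a path of the replace
  graph, or not at all (the children can only be rearranged bijectively).\<close>
datatype 'l edit_mode = Free | Grow | Shrink | StrEdit | Switch 'l | Rigid

definition edit_mode :: "'l dtd \<Rightarrow> 'l uat set \<Rightarrow> 'l lab \<Rightarrow> 'l edit_mode" where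
  "edit_mode D AA L = (case L of Str \<Rightarrow> Rigid | Elem A \<Rightarrow> (case d_rg D A of
      RStar B \<Rightarrow> (if UIns A B \<in> AA \<and> UDel A B \<in> AA then Free else if UIns A B \<in> AA then Grow
                  else if UDel A B \<in> AA then Shrink else Rigid)
    | RStr \<Rightarrow> (if URepStr A \<in> AA then StrEdit else Rigid)
    | RDisj Bs \<Rightarrow> Switch A
    | _ \<Rightarrow> Rigid))"

lemma edit_mode_star:
  "d_rg D A = RStar B \<Longrightarrow> edit_mode D AA (Elem A) = (if UIns A B \<in> AA \<and> UDel A B \<in> AA then Free
     else if UIns A B \<in> AA then Grow else if UDel A B \<in> AA then Shrink else Rigid)"
  "d_rg D A = RStr \<Longrightarrow> edit_mode D AA (Elem A) = (if URepStr A \<in> AA then StrEdit else Rigid)"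
  "d_rg D A = RDisj Bs \<Longrightarrow> edit_mode D AA (Elem A) = Switch A"
  unfolding edit_mode_def by simp_all

lemma edit_mode_cases:
  "edit_mode D AA (Elem A) = Free \<Longrightarrow> \<exists>B. d_rg D A = RStar B \<and> UIns A B \<in> AA \<and> UDel A B \<in> AA"
  "edit_mode D AA (Elem A) = StrEdit \<Longrightarrow> d_rg D A = RStr"
  "edit_mode D AA (Elem A) = Switch A' \<Longrightarrow> A' = A \<and> (\<exists>Bs. d_rg D A = RDisj Bs)"
  unfolding edit_mode_def by (cases "d_rg D A"; auto split: if_splits)+

definition switches :: "'l dtd \<Rightarrow> 'l uat set \<Rightarrow> 'l \<Rightarrow> 'l lab \<Rightarrow> 'l lab \<Rightarrow> bool" where
  "switches D AA A L L' \<longleftrightarrow> (\<exists>X Y. L = Elem X \<and> L' = Elem Y \<and> (X, Y) \<in> (replace_graph D AA A)\<^sup>+)"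

definition children_match :: "'l dtd \<Rightarrow> 'l uat set \<Rightarrow> (nat \<Rightarrow> nat \<Rightarrow> bool)
    \<Rightarrow> 'l xtree \<Rightarrow> nat \<Rightarrow> 'l xtree \<Rightarrow> nat \<Rightarrow> bool" where
  "children_match D AA R t1 n1 t2 n2 \<longleftrightarrow> (case edit_mode D AA (tlab t1 n1) of
      Free \<Rightarrow> True
    | Grow \<Rightarrow> inj_match R (children t1 n1) (children t2 n2)
    | Shrink \<Rightarrow> inj_match (\<lambda>d c. R c d) (children t2 n2) (children t1 n1)
    | StrEdit \<Rightarrow> bij_match (\<lambda>c d. tlab t2 d = tlab t1 c) (children t1 n1) (children t2 n2)
    | Switch A \<Rightarrow> bij_match (\<lambda>c d. R c d \<or> switches D AA A (tlab t1 c) (tlab t2 d))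
                    (children t1 n1) (children t2 n2)
    | Rigid \<Rightarrow> bij_match R (children t1 n1) (children t2 n2))"

lemma children_match_mono:
  "(\<And>a b. R a b \<longrightarrow> S a b) \<Longrightarrow> children_match D AA R t1 n1 t2 n2 \<longrightarrow> children_match D AA S t1 n1 t2 n2"
  unfolding children_match_def
  by (cases "edit_mode D AA (tlab t1 n1)") (auto elim!: inj_match_mono bij_match_mono)

text \<open>\<open>sim D AA t1 n1 t2 n2\<close>: the subtree of \<open>t2\<close> at \<open>n2\<close> can be reached from the subtree of
  \<open>t1\<close> at \<open>n1\<close> as far as the update rights \<open>AA\<close> are concerned.  Allowed updates stay inside
  this relation, while under conditions (1)--(3) a non-trivial forbidden update leaves it.\<close>
inductive sim :: "'l dtd \<Rightarrow> 'l uat set \<Rightarrow> 'l xtree \<Rightarrow> nat \<Rightarrow> 'l xtree \<Rightarrow> nat \<Rightarrow> bool"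
  for D :: "'l dtd" and AA :: "'l uat set" where
  simI: "tlab t1 n1 = tlab t2 n2 \<Longrightarrow> (tlab t1 n1 = Str \<longrightarrow> tval t1 n1 = tval t2 n2) \<Longrightarrow>
    children_match D AA (\<lambda>c d. sim D AA t1 c t2 d) t1 n1 t2 n2 \<Longrightarrow> sim D AA t1 n1 t2 n2"
  monos children_match_mono

lemma sim_lab: "sim D AA t1 n1 t2 n2 \<Longrightarrow> tlab t1 n1 = tlab t2 n2"
  by (cases rule: sim.cases) auto

lemma sim_val: "sim D AA t1 n1 t2 n2 \<Longrightarrow> tlab t1 n1 = Str \<Longrightarrow> tval t1 n1 = tval t2 n2"
  by (cases rule: sim.cases) auto

lemma switches_trans: "switches D AA A L1 L2 \<Longrightarrow> switches D AA A L2 L3 \<Longrightarrow> switches D AA A L1 L3"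
  unfolding switches_def by (auto intro: trancl_trans)

lemma children_match_trans:
  assumes M12: "children_match D AA R t1 n1 t2 n2" and M23: "children_match D AA S t2 n2 t3 n3"
    and lab: "tlab t1 n1 = tlab t2 n2" and RS: "\<And>a b c. R a b \<Longrightarrow> S b c \<Longrightarrow> T a c"
    and R_lab: "\<And>a b. R a b \<Longrightarrow> tlab t1 a = tlab t2 b" and S_lab: "\<And>b c. S b c \<Longrightarrow> tlab t2 b = tlab t3 c"
  shows "children_match D AA T t1 n1 t3 n3"
proof (cases "edit_mode D AA (tlab t1 n1)")
  case Free then show ?thesis unfolding children_match_def by simp
next
  case Grow
  with M12 M23 lab show ?thesis unfolding children_match_def by (simp add: inj_match_trans[OF _ _ RS])
next
  case Shrink
  with M12 M23 lab show ?thesis unfolding children_match_def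
    by simp (rule inj_match_trans, assumption+, rule RS)
next
  case StrEdit
  with M12 M23 lab show ?thesis unfolding children_match_def
    by simp (rule bij_match_trans, assumption+, simp)
next
  case (Switch A)
  have "R a b \<or> switches D AA A (tlab t1 a) (tlab t2 b) \<Longrightarrow>
    S b c \<or> switches D AA A (tlab t2 b) (tlab t3 c) \<Longrightarrow>
    T a c \<or> switches D AA A (tlab t1 a) (tlab t3 c)" for a b c
    using RS R_lab S_lab switches_trans by metis
  with Switch M12 M23 lab show ?thesis unfolding children_match_def
    by simp (rule bij_match_trans, assumption+)
next
  case Rigid
  with M12 M23 lab show ?thesis unfolding children_match_def by (simp add: bij_match_trans[OF _ _ RS])
qed

lemma sim_trans:
  assumes "sim D AA t1 n1 t2 n2"
  shows "sim D AA t2 n2 t3 n3 \<Longrightarrow> sim D AA t1 n1 t3 n3"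
  using assms
proof (induction arbitrary: t3 n3 rule: sim.induct)
  case (simI t1 n1 t2 n2)
  from simI.prems obtain l23: "tlab t2 n2 = tlab t3 n3" and v23: "tlab t2 n2 = Str \<longrightarrow> tval t2 n2 = tval t3 n3"
    and M23: "children_match D AA (\<lambda>c d. sim D AA t2 c t3 d) t2 n2 t3 n3" by cases
  show ?case
  proof (rule sim.simI)
    show "tlab t1 n1 = tlab t3 n3" "tlab t1 n1 = Str \<longrightarrow> tval t1 n1 = tval t3 n3"
      using simI.hyps(1,2) l23 v23 by simp_all
    show "children_match D AA (\<lambda>c d. sim D AA t1 c t3 d) t1 n1 t3 n3"
      by (rule children_match_trans[OF simI(3) M23]) (use simI.hyps(1) sim_lab in auto)
  qed
qed

lemma children_match_bij:
  assumes f: "bij_betw f (children t1 n1) (children t2 n2)" "\<forall>c\<in>children t1 n1. R c (f c)"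
    and R_lab: "\<And>c d. R c d \<Longrightarrow> tlab t1 c = tlab t2 d"
  shows "children_match D AA R t1 n1 t2 n2"
proof -
  have M: "bij_match R (children t1 n1) (children t2 n2)" using f unfolding bij_match_def by blast
  show ?thesis
  proof (cases "edit_mode D AA (tlab t1 n1)")
    case Shrink then show ?thesis
      using bij_match_inj_match[OF bij_match_flip[OF M]] unfolding children_match_def by simp
  qed (use M R_lab[symmetric] in \<open>auto simp: children_match_def intro: bij_match_inj_match elim!: bij_match_mono\<close>)
qed

lemma sim_intro:
  assumes w: "wf_dtd D" and o: "conforming D t1" and S: "S \<subseteq> tnodes t1"
    and lab: "\<And>x. x \<in> S \<Longrightarrow> tlab t2 (f x) = tlab t1 x"
    and val: "\<And>x. x \<in> S \<Longrightarrow> tlab t1 x = Str \<Longrightarrow> tval t2 (f x) = tval t1 x"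
    and reg: "\<And>x. x \<in> S \<Longrightarrow> x \<notin> M \<Longrightarrow> children t1 x \<subseteq> S \<and> bij_betw f (children t1 x) (children t2 (f x))"
    and exc: "\<And>x. x \<in> S \<Longrightarrow> x \<in> M \<Longrightarrow> (\<forall>c\<in>children t1 x \<inter> S. sim D AA t1 c t2 (f c))
       \<Longrightarrow> children_match D AA (\<lambda>c d. sim D AA t1 c t2 d) t1 x t2 (f x)"
  shows "x \<in> S \<Longrightarrow> sim D AA t1 x t2 (f x)"
proof (induction "rank D (tlab t1 x)" arbitrary: x rule: less_induct)
  case less
  have IH: "\<forall>c\<in>children t1 x \<inter> S. sim D AA t1 c t2 (f c)"
  proof
    fix c assume c: "c \<in> children t1 x \<inter> S"
    then have "(x, c) \<in> tedges t1" unfolding children_def by simp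
    then have "rank D (tlab t1 c) < rank D (tlab t1 x)" by (rule edge_rank[OF w o])
    then show "sim D AA t1 c t2 (f c)" using less.hyps c by simp
  qed
  have "children_match D AA (\<lambda>c d. sim D AA t1 c t2 d) t1 x t2 (f x)"
  proof (cases "x \<in> M")
    case True then show ?thesis using exc less.prems IH by blast
  next
    case False
    then have sub: "children t1 x \<subseteq> S" and b: "bij_betw f (children t1 x) (children t2 (f x))"
      using reg less.prems by auto
    have "\<forall>c\<in>children t1 x. sim D AA t1 c t2 (f c)" using IH sub by blast
    then show ?thesis by (rule children_match_bij[OF b]) (rule sim_lab)
  qed
  moreover have "tlab t1 x = tlab t2 (f x)" using lab[OF less.prems] by simp
  ultimately show ?case using val[OF less.prems] by (intro sim.simI) auto
qed

lemma sim_refl: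
  assumes w: "wf_dtd D" and o: "conforming D t" and x: "x \<in> tnodes t"
  shows "sim D AA t x t x"
proof -
  have "sim D AA t x t (id x)"
    by (rule sim_intro[OF w o order_refl, of t id "{}"]) (use children_sub[OF conformingD(1)[OF o]] x in auto)
  then show ?thesis by simp
qed

lemma iso_refl: "iso t t"
  unfolding iso_def by (rule exI[of _ id]) simp

lemma iso_children:
  assumes t2: "is_tree t2" and b: "bij_betw f (tnodes t1) (tnodes t2)"
    and e: "\<forall>x \<in> tnodes t1. \<forall>y \<in> tnodes t1. (x, y) \<in> tedges t1 \<longleftrightarrow> (f x, f y) \<in> tedges t2"
    and t1: "is_tree t1" and x: "x \<in> tnodes t1"
  shows "bij_betw f (children t1 x) (children t2 (f x))"
proof -
  have "children t2 (f x) = f ` children t1 x"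
  proof
    show "children t2 (f x) \<subseteq> f ` children t1 x"
    proof
      fix d assume "d \<in> children t2 (f x)"
      then have de: "(f x, d) \<in> tedges t2" unfolding children_def by simp
      then have "d \<in> tnodes t2" using edge_nodes[OF t2] by blast
      then obtain c where c: "c \<in> tnodes t1" "d = f c" using bij_betw_imp_surj_on[OF b] by blast
      then have "(x, c) \<in> tedges t1" using e x de by simp
      then show "d \<in> f ` children t1 x" using c(2) unfolding children_def by simp
    qed
    show "f ` children t1 x \<subseteq> children t2 (f x)"
    proof
      fix d assume "d \<in> f ` children t1 x"
      then obtain c where c: "(x, c) \<in> tedges t1" "d = f c" unfolding children_def by auto
      then have "c \<in> tnodes t1" using edge_nodes[OF t1] by blast
      then show "d \<in> children t2 (f x)" using c e x unfolding children_def by simp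
    qed
  qed
  moreover have "inj_on f (children t1 x)"
    using inj_on_subset[OF bij_betw_imp_inj_on[OF b] children_sub[OF t1]] .
  ultimately show ?thesis unfolding bij_betw_def by simp
qed

lemma iso_sim:
  assumes w: "wf_dtd D" and o: "conforming D t1" and i: "iso t1 t2" and t2: "is_tree t2"
  shows "sim D AA t1 (troot t1) t2 (troot t2)"
proof -
  obtain f where f: "bij_betw f (tnodes t1) (tnodes t2)" "f (troot t1) = troot t2"
     "\<forall>x \<in> tnodes t1. \<forall>y \<in> tnodes t1. (x, y) \<in> tedges t1 \<longleftrightarrow> (f x, f y) \<in> tedges t2"
     "\<forall>x \<in> tnodes t1. tlab t2 (f x) = tlab t1 x"
     "\<forall>x \<in> tnodes t1. tlab t1 x = Str \<longrightarrow> tval t2 (f x) = tval t1 x"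
    using i unfolding iso_def by blast
  have t1: "is_tree t1" using conformingD(1)[OF o] .
  have "sim D AA t1 (troot t1) t2 (f (troot t1))"
    by (rule sim_intro[OF w o order_refl, of t2 f "{}"])
      (use f(4,5) iso_children[OF t2 f(1) f(3) t1] children_sub[OF t1] is_treeD(2)[OF t1] in auto)
  then show ?thesis using f(2) by simp
qed

lemma funpow_return:
  assumes fin: "finite S" and b: "bij_betw h S S" and y: "y \<in> S"
  shows "\<exists>k>0. (h ^^ k) y = y"
proof -
  let ?g = "\<lambda>i. (h ^^ i) y"
  have into: "?g ` {0..card S} \<subseteq> S" using bij_betw_funpow[OF b] y bij_betwE by blast
  have "\<not> inj_on ?g {0..card S}"
  proof
    assume "inj_on ?g {0..card S}"
    then have "card {0..card S} \<le> card S" using card_inj_on_le[OF _ into fin] by blast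
    then show False by simp
  qed
  then obtain i j where ij: "i < j" "?g i = ?g j"
    unfolding inj_on_def by (metis linorder_neqE_nat)
  have "(h ^^ i) ((h ^^ (j - i)) y) = (h ^^ i) y"
    using ij by (metis add_diff_inverse_nat comp_apply funpow_add less_imp_not_less)
  moreover have "(h ^^ (j - i)) y \<in> S" using bij_betw_funpow[OF b] y bij_betwE by blast
  moreover have "inj_on (h ^^ i) S" using bij_betw_funpow[OF b] bij_betw_imp_inj_on by blast
  ultimately have "(h ^^ (j - i)) y = y" using y inj_onD by metis
  then show ?thesis using ij(1) by (intro exI[of _ "j - i"]) simp
qed

text \<open>This is how a
  simulation at a parent is pushed down to the one child that was changed.\<close>
lemma orbit:
  assumes fin: "finite S" and M: "inj_match Q S S" and y: "y \<in> S"
    and Q': "\<And>d. d \<in> S \<Longrightarrow> d \<noteq> y \<Longrightarrow> Q' d"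
    and tr: "\<And>a b c. Q a b \<Longrightarrow> Q' b \<Longrightarrow> Q b c \<Longrightarrow> Q a c"
  shows "Q y y"
proof -
  obtain h where b: "bij_betw h S S" and Q: "\<And>c. c \<in> S \<Longrightarrow> Q c (h c)"
    using inj_match_endo[OF fin M] unfolding bij_match_def by blast
  obtain k where k: "k > 0" "(h ^^ k) y = y" using funpow_return[OF fin b y] by blast
  have inS: "\<And>j. (h ^^ j) y \<in> S" using bij_betw_funpow[OF b] y bij_betwE by blast
  have "Q y y \<or> Q y ((h ^^ j) y)" if "j \<ge> 1" for j
    using that
  proof (induction j rule: dec_induct)
    case base then show ?case using Q[OF y] by simp
  next
    case (step j)
    show ?case
    proof (cases "Q y y \<or> (h ^^ j) y = y")
      case False
      then have "Q y ((h ^^ j) y)" "Q' ((h ^^ j) y)" using step.IH Q' inS by auto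
      then show ?thesis using tr Q[OF inS] by simp
    qed (use step.IH in auto)
  qed
  then show ?thesis using k by (metis One_nat_def Suc_leI)
qed

lemma local_change_sim:
  assumes w: "wf_dtd D" and o: "conforming D t" and o': "conforming D t'" and L: "local_change t t' m C"
    and exc: "\<forall>c\<in>children t m \<inter> (tnodes t \<inter> tnodes t' - C). sim D AA t c t' c
       \<Longrightarrow> children_match D AA (\<lambda>c d. sim D AA t c t' d) t m t' m"
  shows "sim D AA t (troot t) t' (troot t)"
proof -
  have tr: "is_tree t" and tr': "is_tree t'" using o o' conformingD by auto
  let ?S = "tnodes t \<inter> tnodes t' - C"
  have Cpar: "z = m" if "c \<in> C" "c \<in> children t z" for z c
    using that local_changeD(4)[OF L] uniq_parent[OF tr] unfolding children_def by blast
  have rS: "troot t \<in> ?S"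
    using is_treeD(2)[OF tr] is_treeD(2)[OF tr'] local_changeD(1,4)[OF L] is_treeD(4)[OF tr]
    unfolding children_def by auto
  have "sim D AA t (troot t) t' (id (troot t))"
  proof (rule sim_intro[of D t ?S t' id "{m}" AA, OF w o _ _ _ _ _ rS])
    fix x assume x: "x \<in> ?S"
    show "tlab t' (id x) = tlab t x" "tlab t x = Str \<Longrightarrow> tval t' (id x) = tval t x"
      using x local_changeD(5,6)[OF L] by auto
    show "children t x \<subseteq> ?S \<and> bij_betw id (children t x) (children t' (id x))" if "x \<notin> {m}"
    proof -
      have e: "children t' x = children t x" using x that local_changeD(7)[OF L] by auto
      then show ?thesis using children_sub[OF tr] children_sub[OF tr'] Cpar x that by fastforce
    qed
  qed (use exc in auto)
  then show ?thesis by simp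
qed

text \<open>Conversely, nodes that are not ancestors of \<open>m\<close> carry unchanged subtrees, so the new tree
  simulates the old one there.\<close>
lemma unchanged_sim:
  assumes w: "wf_dtd D" and o: "conforming D t" and o': "conforming D t'" and L: "local_change t t' m C"
    and c: "c \<in> tnodes t" "c \<in> tnodes t'" "(c, m) \<notin> (tedges t)\<^sup>*" "c \<notin> C"
  shows "sim D AA t' c t c"
proof -
  have tr: "is_tree t" and tr': "is_tree t'" using o o' conformingD by auto
  let ?S = "{z \<in> tnodes t \<inter> tnodes t'. (z, m) \<notin> (tedges t)\<^sup>* \<and> z \<notin> C}"
  have Cpar: "z = m" if "d \<in> C" "d \<in> children t z" for z d
    using that local_changeD(4)[OF L] uniq_parent[OF tr] unfolding children_def by blast
  have "sim D AA t' c t (id c)"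
  proof (rule sim_intro[of D t' ?S t id "{}" AA, OF w o'])
    fix x assume x: "x \<in> ?S"
    show "tlab t (id x) = tlab t' x" "tlab t' x = Str \<Longrightarrow> tval t (id x) = tval t' x"
      using x local_changeD(5,6)[OF L] by auto
    have xm: "x \<noteq> m" using x by auto
    then have e: "children t' x = children t x" using x local_changeD(7)[OF L] by auto
    have "d \<in> ?S" if d: "d \<in> children t x" for d
    proof -
      have xd: "(x, d) \<in> tedges t" using d unfolding children_def by simp
      have "(d, m) \<notin> (tedges t)\<^sup>*"
      proof
        assume "(d, m) \<in> (tedges t)\<^sup>*"
        then have "(x, m) \<in> (tedges t)\<^sup>*" by (rule converse_rtrancl_into_rtrancl[OF xd])
        then show False using x by simp
      qed
      then show ?thesis using d e children_sub[OF tr, of x] children_sub[OF tr', of x] Cpar[OF _ d] xm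
        by auto
    qed
    then show "children t' x \<subseteq> ?S \<and> bij_betw id (children t' x) (children t (id x))" using e by auto
  qed (use c in auto)
  then show ?thesis by simp
qed

definition update_effect :: "'l dtd \<Rightarrow> 'l uat set \<Rightarrow> 'l uat \<Rightarrow> 'l xtree \<Rightarrow> 'l xtree \<Rightarrow> bool" where
  "update_effect D AA u t t' \<longleftrightarrow> conforming D t' \<and> (\<exists>m C. local_change t t' m C \<and> tlab t m = Elem (uat_elem u)
     \<and> (u \<in> AA \<longrightarrow> (\<forall>c\<in>children t m \<inter> (tnodes t \<inter> tnodes t' - C). sim D AA t c t' c)
          \<longrightarrow> children_match D AA (\<lambda>c d. sim D AA t c t' d) t m t' m)
     \<and> (u \<notin> AA \<longrightarrow> (\<forall>A X Y. u = URep A X Y \<longrightarrow> (X, Y) \<notin> (replace_graph D AA A)\<^sup>+)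
          \<longrightarrow> \<not> iso t' t \<longrightarrow> \<not> sim D AA t m t' m))"

lemma update_effectI:
  assumes "conforming D t'" "local_change t t' m C" "tlab t m = Elem (uat_elem u)"
    "u \<in> AA \<Longrightarrow> \<forall>c\<in>children t m \<inter> (tnodes t \<inter> tnodes t' - C). sim D AA t c t' c
       \<Longrightarrow> children_match D AA (\<lambda>c d. sim D AA t c t' d) t m t' m"
    "u \<notin> AA \<Longrightarrow> \<forall>A X Y. u = URep A X Y \<longrightarrow> (X, Y) \<notin> (replace_graph D AA A)\<^sup>+
       \<Longrightarrow> \<not> iso t' t \<Longrightarrow> \<not> sim D AA t m t' m"
  shows "update_effect D AA u t t'"
  using assms unfolding update_effect_def by blast

lemma insert_effect:
  assumes o: "conforming D t" and v: "valid_upd (Insert n s) t" and mt: "matches D t (Insert n s) u"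
    and vu: "valid_uat D u"
  shows "update_effect D AA u t (apply_upd (Insert n s) t)"
proof -
  obtain A B where u: "u = UIns A B" using mt by (cases u) auto
  have l: "tlab t n = Elem A" and s: "s \<in> I_D D B" and rg: "d_rg D A = RStar B"
    using mt vu u by auto
  have n: "n \<in> tnodes t" and d: "tnodes s \<inter> tnodes t = {}" using v by auto
  have tr: "is_tree t" using conformingD(1)[OF o] .
  interpret I: insertion t s n using tr I_D_tree[OF s] n d by unfold_locales
  let ?t' = "ins_tree t n s"
  have ch: "children ?t' n = insert (troot s) (children t n)" "troot s \<notin> children t n"
    using I.children_t[OF n] I.rs children_sub[OF tr] by auto
  have allowed: "children_match D AA (\<lambda>c d. sim D AA t c ?t' d) t n ?t' n"
    if "UIns A B \<in> AA" "\<forall>c\<in>children t n \<inter> (tnodes t \<inter> tnodes ?t' - {}). sim D AA t c ?t' c"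
  proof -
    have "children t n \<subseteq> tnodes t \<inter> tnodes ?t'" using children_sub[OF tr] I.simps(1) by auto
    then have "inj_match (\<lambda>c d. sim D AA t c ?t' d) (children t n) (children ?t' n)"
      using that(2) ch unfolding inj_match_def by (intro exI[of _ id]) auto
    then show ?thesis using edit_mode_star(1)[OF rg] that(1) l unfolding children_match_def by auto
  qed
  have forbidden: "\<not> sim D AA t n ?t' n" if "UIns A B \<notin> AA"
  proof
    assume "sim D AA t n ?t' n"
    then have M: "children_match D AA (\<lambda>c d. sim D AA t c ?t' d) t n ?t' n" by cases
    have card: "card (children ?t' n) = Suc (card (children t n))" using ch finite_children[OF tr] by simp
    show False
    proof (cases "UDel A B \<in> AA")
      case True
      then have "inj_match (\<lambda>d c. sim D AA t c ?t' d) (children ?t' n) (children t n)"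
        using M edit_mode_star(1)[OF rg] that l unfolding children_match_def by simp
      then show False using inj_match_card finite_children[OF tr] card by fastforce
    next
      case False
      then have "bij_match (\<lambda>c d. sim D AA t c ?t' d) (children t n) (children ?t' n)"
        using M edit_mode_star(1)[OF rg] that l unfolding children_match_def by simp
      then show False using bij_match_card card by fastforce
    qed
  qed
  show ?thesis unfolding apply_upd.simps
    by (rule update_effectI[OF insert_conforming[OF o n d s l rg] insert_local_change[OF tr I_D_tree[OF s] n d]])
      (use l u allowed forbidden in auto)
qed

lemma delete_effect:
  assumes w: "wf_dtd D" and o: "conforming D t" and mt: "matches D t (Delete n) u" and vu: "valid_uat D u"
  shows "update_effect D AA u t (apply_upd (Delete n) t)"
proof -
  obtain A B where u: "u = UDel A B" using mt by (cases u) auto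
  obtain p where e: "(p, n) \<in> tedges t" and l: "tlab t p = Elem A"
    using mt u by (auto simp: parent_labelled_def)
  have rg: "d_rg D A = RStar B" using vu u by auto
  have tr: "is_tree t" using conformingD(1)[OF o] .
  interpret Dl: deletion t n using tr edge_nodes[OF tr e] is_treeD(4)[OF tr] e
    by unfold_locales auto
  let ?t' = "del_tree t n"
  have L: "local_change t ?t' p {}" using delete_local_change[OF w o e] .
  have p: "p \<in> Dl.kept" using local_changeD(3)[OF L] Dl.simps(1) by simp
  have ch: "children ?t' p = children t p - {n}" "n \<in> children t p"
    using Dl.children_kept[OF p] e unfolding children_def by auto
  have allowed: "children_match D AA (\<lambda>c d. sim D AA t c ?t' d) t p ?t' p"
    if "UDel A B \<in> AA" "\<forall>c\<in>children t p \<inter> (tnodes t \<inter> tnodes ?t' - {}). sim D AA t c ?t' c"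
  proof -
    have "children ?t' p \<subseteq> tnodes t \<inter> tnodes ?t'"
      using children_sub[OF Dl.is_tree] Dl.kept_sub Dl.simps(1) by auto
    then have "inj_match (\<lambda>d c. sim D AA t c ?t' d) (children ?t' p) (children t p)"
      using that(2) ch unfolding inj_match_def by (intro exI[of _ id]) auto
    then show ?thesis using edit_mode_star(1)[OF rg] that(1) l unfolding children_match_def by auto
  qed
  have forbidden: "\<not> sim D AA t p ?t' p" if "UDel A B \<notin> AA"
  proof
    assume "sim D AA t p ?t' p"
    then have M: "children_match D AA (\<lambda>c d. sim D AA t c ?t' d) t p ?t' p" by cases
    have card: "card (children ?t' p) < card (children t p)"
      unfolding ch(1) using card_Diff1_less[OF finite_children[OF tr] ch(2)] .
    show False
    proof (cases "UIns A B \<in> AA")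
      case True
      then have "inj_match (\<lambda>c d. sim D AA t c ?t' d) (children t p) (children ?t' p)"
        using M edit_mode_star(1)[OF rg] that l unfolding children_match_def by simp
      then show False using inj_match_card finite_children[OF Dl.is_tree] card by fastforce
    next
      case False
      then have "bij_match (\<lambda>c d. sim D AA t c ?t' d) (children t p) (children ?t' p)"
        using M edit_mode_star(1)[OF rg] that l unfolding children_match_def by simp
      then show False using bij_match_card card by fastforce
    qed
  qed
  show ?thesis unfolding apply_upd.simps
    by (rule update_effectI[OF delete_conforming[OF o e l rg] L]) (use l u allowed forbidden in auto)
qed

lemma replace_effect:
  assumes w: "wf_dtd D" and o: "conforming D t" and v: "valid_upd (ReplaceT n s) t"
    and mt: "matches D t (ReplaceT n s) u" and vu: "valid_uat D u"
  shows "update_effect D AA u t (apply_upd (ReplaceT n s) t)"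
proof -
  obtain A B B' where u: "u = URep A B B'" using mt by (cases u) auto
  obtain p where e: "(p, n) \<in> tedges t" and l: "tlab t p = Elem A"
    using mt u by (auto simp: parent_labelled_def)
  have ln: "tlab t n = Elem B" and s: "s \<in> I_D D B'" and BB': "B \<noteq> B'" using mt u by auto
  obtain Bs where rg: "d_rg D A = RDisj Bs" and BB: "B \<in> set Bs" "B' \<in> set Bs"
    using vu u by auto
  have d: "tnodes s \<inter> tnodes t = {}" using v by auto
  have tr: "is_tree t" using conformingD(1)[OF o] .
  let ?t' = "ins_tree (del_tree t n) p s"
  have ap: "apply_upd (ReplaceT n s) t = ?t'" using parent_eq[OF tr e] by simp
  have L: "local_change t ?t' p {}" using replace_local_change[OF w o e I_D_tree[OF s] d] .
  have pt: "p \<in> tnodes t" using edge_nodes[OF tr e] by simp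
  have cp: "children t p = {n}"
    using children_disj[OF conformingD(2)[OF o pt] l rg] e unfolding children_def by simp
  have cp': "children ?t' p = {troot s}"
  proof -
    interpret Dl: deletion t n using tr edge_nodes[OF tr e] is_treeD(4)[OF tr] e
      by unfold_locales auto
    have pk: "p \<in> Dl.kept" using local_changeD(3)[OF delete_local_change[OF w o e]] Dl.simps(1) by simp
    interpret I: insertion "del_tree t n" s p
      using Dl.is_tree I_D_tree[OF s] pk d Dl.kept_sub Dl.simps(1) by unfold_locales auto
    show ?thesis using I.children_t pk Dl.children_kept[OF pk] cp Dl.simps(1) by simp
  qed
  have ls: "tlab ?t' (troot s) = Elem B'"
    using I_D_lab[OF s] is_treeD(2)[OF I_D_tree[OF s]] by (simp add: ins_tree_def)
  have M: "children_match D AA R t p ?t' p \<longleftrightarrow>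
      R n (troot s) \<or> switches D AA A (Elem B) (Elem B')" for R
    by (simp add: children_match_def edit_mode_star(3)[OF rg] l ln ls cp cp' bij_match_singleton)
  have "(B, B') \<in> replace_graph D AA A" if "u \<in> AA"
    using that u rg BB unfolding replace_graph_def by simp
  then have allowed: "u \<in> AA \<Longrightarrow> children_match D AA (\<lambda>c d. sim D AA t c ?t' d) t p ?t' p"
    unfolding M switches_def by blast
  have "\<not> sim D AA t n ?t' (troot s)" using sim_lab ln ls BB' by fastforce
  then have forbidden: "\<not> sim D AA t p ?t' p" if "(B, B') \<notin> (replace_graph D AA A)\<^sup>+"
  proof (intro notI)
    assume "sim D AA t p ?t' p"
    then have "children_match D AA (\<lambda>c d. sim D AA t c ?t' d) t p ?t' p" by cases
    then show False using M that \<open>\<not> sim D AA t n ?t' (troot s)\<close> unfolding switches_def by simp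
  qed
  show ?thesis unfolding ap
    by (rule update_effectI[OF replace_conforming[OF w o e l rg BB(2) s d] L])
      (use l u allowed forbidden in auto)
qed

lemma replace_str_effect:
  assumes o: "conforming D t" and mt: "matches D t (ReplaceS n v) u" and vu: "valid_uat D u"
  shows "update_effect D AA u t (apply_upd (ReplaceS n v) t)"
proof -
  obtain A where u: "u = URepStr A" using mt by (cases u) auto
  obtain p where e: "(p, n) \<in> tedges t" and l: "tlab t p = Elem A"
    using mt u by (auto simp: parent_labelled_def)
  have rg: "d_rg D A = RStr" using vu u by auto
  have tr: "is_tree t" using conformingD(1)[OF o] .
  let ?t' = "t\<lparr>tval := (tval t)(n := v)\<rparr>"
  have pt: "p \<in> tnodes t" using edge_nodes[OF tr e] by simp
  have cs: "children t p = {n}" "tlab t n = Str" "children ?t' p = {n}"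
    using children_str[OF tr conformingD(2)[OF o pt] l rg] e unfolding children_def by auto
  have allowed: "children_match D AA (\<lambda>c d. sim D AA t c ?t' d) t p ?t' p" if "u \<in> AA"
    using that by (simp add: children_match_def edit_mode_star(2)[OF rg] u l cs bij_match_singleton)
  have forbidden: "\<not> sim D AA t p ?t' p" if "u \<notin> AA" "\<not> iso ?t' t"
  proof
    assume "sim D AA t p ?t' p"
    then have "children_match D AA (\<lambda>c d. sim D AA t c ?t' d) t p ?t' p" by cases
    then have "sim D AA t n ?t' n"
      using that(1) by (simp add: children_match_def edit_mode_star(2)[OF rg] u l cs bij_match_singleton)
    then have "tval t n = tval ?t' n" using cs(2) by (rule sim_val)
    then have "v = tval t n" by simp
    then have "(tval t)(n := v) = tval t" by simp
    then have "?t' = t" by simp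
    then show False using that(2) iso_refl[of t] by simp
  qed
  have "conforming D ?t'" by (subst conforming_tval_upd) (rule o)
  then show ?thesis unfolding apply_upd.simps
    by (rule update_effectI[OF _ replace_str_local_change[OF tr e]]) (use l u allowed forbidden in auto)
qed

lemma update_effect:
  assumes w: "wf_dtd D" and o: "conforming D t" and v: "valid_upd op t" and mt: "matches D t op u"
    and vu: "valid_uat D u"
  shows "update_effect D AA u t (apply_upd op t)"
proof (cases op)
  case (Insert n s) then show ?thesis using insert_effect[OF o] v mt vu by simp
next
  case (Delete n) then show ?thesis using delete_effect[OF w o] mt vu by simp
next
  case (ReplaceT n s) then show ?thesis using replace_effect[OF w o] v mt vu by simp
next
  case (ReplaceS n s) then show ?thesis using replace_str_effect[OF o] mt vu by simp
qed

section \<open>Allowed updates stay inside the simulation\<close>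

lemma allowed_step_sim:
  assumes w: "wf_dtd D" and o: "conforming D t" and AA: "AA \<subseteq> valid_set D"
    and v: "valid_upd op t" and m: "op \<in> sem_uats D AA t"
  shows "conforming D (apply_upd op t) \<and> troot (apply_upd op t) = troot t
     \<and> sim D AA t (troot t) (apply_upd op t) (troot t)"
proof -
  obtain u where u: "u \<in> AA" "matches D t op u" using m unfolding sem_uats_def by blast
  have vu: "valid_uat D u" using AA u(1) unfolding valid_set_def by blast
  obtain m C where E: "conforming D (apply_upd op t)" "local_change t (apply_upd op t) m C"
    "u \<in> AA \<Longrightarrow> \<forall>c\<in>children t m \<inter> (tnodes t \<inter> tnodes (apply_upd op t) - C). sim D AA t c (apply_upd op t) c
       \<Longrightarrow> children_match D AA (\<lambda>c d. sim D AA t c (apply_upd op t) d) t m (apply_upd op t) m"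
    using update_effect[where AA = AA, OF w o v u(2) vu] unfolding update_effect_def by blast
  show ?thesis using local_change_sim[OF w o E(1,2) E(3)[OF u(1)]] local_changeD(1)[OF E(2)] E(1) by simp
qed

lemma allowed_seq_sim:
  assumes w: "wf_dtd D" and AA: "AA \<subseteq> valid_set D"
  shows "allowed D AA t ops \<Longrightarrow> conforming D t \<Longrightarrow> conforming D (apply_seq ops t)
     \<and> troot (apply_seq ops t) = troot t \<and> sim D AA t (troot t) (apply_seq ops t) (troot t)"
proof (induction ops arbitrary: t)
  case Nil
  then show ?case using sim_refl[OF w Nil(2) is_treeD(2)[OF conformingD(1)[OF Nil(2)]]] by simp
next
  case (Cons op ops)
  have v: "valid_upd op t" and m: "op \<in> sem_uats D AA t" and al: "allowed D AA (apply_upd op t) ops"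
    using Cons.prems by auto
  have s1: "conforming D (apply_upd op t) \<and> troot (apply_upd op t) = troot t
     \<and> sim D AA t (troot t) (apply_upd op t) (troot t)" using allowed_step_sim[OF w Cons.prems(2) AA v m] .
  then have s2: "conforming D (apply_seq ops (apply_upd op t))
     \<and> troot (apply_seq ops (apply_upd op t)) = troot t
     \<and> sim D AA (apply_upd op t) (troot t) (apply_seq ops (apply_upd op t)) (troot t)"
    using Cons.IH[OF al] by simp
  then show ?case using s1 sim_trans[of D AA t "troot t" "apply_upd op t" "troot t"] by auto
qed

section \<open>Forbidden updates leave the simulation\<close>

definition star_condition :: "'l dtd \<Rightarrow> 'l uat set \<Rightarrow> 'l uat set \<Rightarrow> bool" where
  "star_condition D AA FF \<longleftrightarrow> (\<forall>A \<in> d_ele D. \<forall>B. d_rg D A = RStar B \<longrightarrow>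
     UIns A B \<in> AA \<longrightarrow> UDel A B \<in> AA \<longrightarrow> nothing_forbidden_below D FF B)"

definition replace_condition :: "'l dtd \<Rightarrow> 'l uat set \<Rightarrow> 'l uat set \<Rightarrow> bool" where
  "replace_condition D AA FF \<longleftrightarrow> (\<forall>A \<in> d_ele D. \<forall>Bs. d_rg D A = RDisj Bs \<longrightarrow>
     (replace_graph D AA A)\<^sup>+ \<inter> forbidden_edges FF A = {})"

definition cycle_condition :: "'l dtd \<Rightarrow> 'l uat set \<Rightarrow> 'l uat set \<Rightarrow> bool" where
  "cycle_condition D AA FF \<longleftrightarrow> (\<forall>A \<in> d_ele D. \<forall>Bs. d_rg D A = RDisj Bs \<longrightarrow>
     (\<forall>Bi \<in> set Bs. (Bi, Bi) \<in> (replace_graph D AA A)\<^sup>+ \<longrightarrow> nothing_forbidden_below D FF Bi))"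

lemma star_conditionD:
  assumes "star_condition D AA FF" "A \<in> d_ele D" "d_rg D A = RStar B" "UIns A B \<in> AA" "UDel A B \<in> AA"
  shows "nothing_forbidden_below D FF B"
  using assms unfolding star_condition_def by blast

lemma cycle_conditionD:
  assumes "cycle_condition D AA FF" "A \<in> d_ele D" "d_rg D A = RDisj Bs" "B \<in> set Bs"
    "(B, B) \<in> (replace_graph D AA A)\<^sup>+"
  shows "nothing_forbidden_below D FF B"
  using assms unfolding cycle_condition_def by blast

lemma sim_child_by_orbit:
  assumes fin: "finite (children t x)" and y: "y \<in> children t x"
    and others: "\<And>d. d \<in> children t x \<Longrightarrow> d \<noteq> y \<Longrightarrow> sim D AA t0 d t d"
    and M: "inj_match (\<lambda>a b. sim D AA t a t0 b) (children t x) (children t x)"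
  shows "sim D AA t y t0 y"
proof -
  have tr3: "sim D AA t a t0 c" if "sim D AA t a t0 b" "sim D AA t0 b t b" "sim D AA t b t0 c" for a b c
    using sim_trans[OF sim_trans[OF that(1,2)] that(3)] .
  show ?thesis by (rule orbit[OF fin M y, where Q' = "\<lambda>d. sim D AA t0 d t d"]) (fact others, fact tr3)
qed

lemma children_match_self:
  assumes M: "children_match D AA R t x t0 x" and chx: "children t0 x = children t x"
    and fin: "finite (children t x)" and mode: "edit_mode D AA (tlab t x) \<in> {Grow, Shrink, Rigid}"
  shows "inj_match R (children t x) (children t x)"
proof -
  consider "edit_mode D AA (tlab t x) = Grow" | "edit_mode D AA (tlab t x) = Shrink"
    | "edit_mode D AA (tlab t x) = Rigid" using mode by blast
  then show ?thesis
  proof cases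
    case 1 then show ?thesis using M chx unfolding children_match_def by simp
  next
    case 2
    then have "inj_match (\<lambda>d c. R c d) (children t x) (children t x)"
      using M chx unfolding children_match_def by simp
    then show ?thesis using bij_match_inj_match[OF bij_match_flip[OF inj_match_endo[OF fin]]] by simp
  next
    case 3 then show ?thesis using M chx bij_match_inj_match unfolding children_match_def by simp
  qed
qed

text \<open>If something is forbidden below the type \<open>B\<close> of the child \<open>y\<close> of \<open>x\<close>, and all other children
  of \<open>x\<close> are unchanged, then the simulation at \<open>x\<close> passes down to \<open>y\<close>: in a free star node
  condition (1) is violated, below a disjunction only a replacement cycle could change \<open>y\<close>, which
  condition (3) excludes, and otherwise we follow the orbit of \<open>y\<close>.\<close>
lemma sim_passes_to_child:
  assumes o: "conforming D t" and x: "x \<in> tnodes t" and y: "y \<in> children t x"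
    and chx: "children t0 x = children t x" and ly: "tlab t y = Elem B" and ly0: "tlab t0 y = tlab t y"
    and others: "\<And>d. d \<in> children t x \<Longrightarrow> d \<noteq> y \<Longrightarrow> sim D AA t0 d t d"
    and nfb: "\<not> nothing_forbidden_below D FF B"
    and c1: "star_condition D AA FF" and c3: "cycle_condition D AA FF"
    and R: "sim D AA t x t0 x"
  shows "sim D AA t y t0 y"
proof -
  have tr: "is_tree t" using conformingD(1)[OF o] .
  have xy: "(x, y) \<in> tedges t" using y unfolding children_def by simp
  obtain A where lx: "tlab t x = Elem A" and A: "A \<in> d_ele D"
    and "tlab t y = Str \<or> (\<exists>B'. tlab t y = Elem B' \<and> (A, B') \<in> sub_rel D)"
    by (rule edge_sub_rel[OF o xy])
  then have "(A, B) \<in> sub_rel D" using ly by simp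
  then have Bs: "B \<in> subs (d_rg D A)" unfolding sub_rel_def by simp
  have M: "children_match D AA (\<lambda>c d. sim D AA t c t0 d) t x t0 x" using R by cases
  have fin: "finite (children t x)" using finite_children[OF tr] .
  show ?thesis
  proof (cases "edit_mode D AA (Elem A)")
    case Free
    then obtain B0 where B0: "d_rg D A = RStar B0" "UIns A B0 \<in> AA" "UDel A B0 \<in> AA"
      using edit_mode_cases(1)[OF Free] by blast
    moreover have "B = B0" using Bs B0(1) by simp
    ultimately have False using star_conditionD[OF c1 A] nfb by blast
    then show ?thesis ..
  next
    case StrEdit
    then have "d_rg D A = RStr" by (rule edit_mode_cases(2))
    then show ?thesis using Bs by simp
  next
    case (Switch A')
    then obtain Bl where A': "A' = A" and rg: "d_rg D A = RDisj Bl" using edit_mode_cases(3)[OF Switch] by blast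
    have cx: "children t x = {y}" using children_disj[OF conformingD(2)[OF o x] lx rg y] .
    have "sim D AA t y t0 y \<or> (B, B) \<in> (replace_graph D AA A)\<^sup>+"
      using M Switch lx chx cx ly ly0 A'
      unfolding children_match_def switches_def by (simp add: bij_match_singleton)
    moreover have "nothing_forbidden_below D FF B" if "(B, B) \<in> (replace_graph D AA A)\<^sup>+"
      using cycle_conditionD[OF c3 A rg] Bs rg that by simp
    ultimately show ?thesis using nfb by blast
  qed (use sim_child_by_orbit[OF fin y others] children_match_self[OF M chx fin] lx in simp_all)
qed

lemma ancestor_label:
  assumes o: "conforming D t" and p: "(y, m) \<in> (tedges t)\<^sup>*" and y: "y \<in> tnodes t"
    and lm: "tlab t m = Elem M"
  obtains B where "tlab t y = Elem B" "le_D D B M"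
proof (cases "tlab t y")
  case (Elem B)
  then show ?thesis using that path_le[OF o p Elem lm] by blast
next
  case Str
  then have "children t y = {}" using conformingD(2)[OF o y] unfolding conforms_at_def by simp
  then have "y = m" using p unfolding children_def by (auto elim: converse_rtranclE)
  then show ?thesis using Str lm by simp
qed

lemma path_child_unique:
  assumes w: "wf_dtd D" and o: "conforming D t" and xc: "(x, c) \<in> tedges t" and xy: "(x, y) \<in> tedges t"
    and cm: "(c, m) \<in> (tedges t)\<^sup>*" and ym: "(y, m) \<in> (tedges t)\<^sup>*"
  shows "c = y"
proof (rule ccontr)
  assume ne: "c \<noteq> y"
  have tr: "is_tree t" using conformingD(1)[OF o] .
  have no_path: False if "(x, a) \<in> tedges t" "(x, b) \<in> tedges t" "a \<noteq> b" "(a, b) \<in> (tedges t)\<^sup>*" for a b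
  proof -
    have "(a, b) \<in> (tedges t)\<^sup>+" using that(3,4) by (simp add: rtrancl_eq_or_trancl)
    then obtain z where z: "(a, z) \<in> (tedges t)\<^sup>*" "(z, b) \<in> tedges t" using tranclD2 by metis
    then have "z = x" using uniq_parent[OF tr _ that(2)] by blast
    then have "(x, x) \<in> (tedges t)\<^sup>+" using that(1) z(1) by (simp add: rtrancl_into_trancl2)
    then show False using no_cycle[OF w o] by blast
  qed
  show False using ancestors_linear[OF tr cm ym] no_path[OF xc xy ne] no_path[OF xy xc ne[symmetric]] by blast
qed

lemma no_sim_above_change:
  assumes w: "wf_dtd D" and o: "conforming D t" and o0: "conforming D t0" and L: "local_change t t0 m C"
    and lm: "tlab t m = Elem (uat_elem u)" and u: "u \<in> FF" and nR: "\<not> sim D AA t m t0 m"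
    and c1: "star_condition D AA FF" and c3: "cycle_condition D AA FF"
  shows "(x, m) \<in> (tedges t)\<^sup>* \<Longrightarrow> \<not> sim D AA t x t0 x"
proof (induction rule: converse_rtrancl_induct)
  case base then show ?case using nR .
next
  case (step x y)
  have tr: "is_tree t" and tr0: "is_tree t0" using o o0 conformingD by auto
  have xy: "(x, y) \<in> tedges t" using step.hyps(1) .
  have xt: "x \<in> tnodes t" and yt: "y \<in> tnodes t" using edge_nodes[OF tr xy] by auto
  have xm: "(x, m) \<in> (tedges t)\<^sup>*" using step.hyps by (rule converse_rtrancl_into_rtrancl)
  have xnm: "x \<noteq> m"
    using no_cycle[OF w o] xy step.hyps(2) by (metis rtrancl_into_trancl2)
  have chx: "children t0 x = children t x"
    using local_changeD(7)[OF L xt local_changeD(8)[OF L xt xm] xnm] .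
  have yc: "y \<in> children t x" using xy unfolding children_def by simp
  obtain B where ly: "tlab t y = Elem B" and le: "le_D D B (uat_elem u)"
    using ancestor_label[OF o step.hyps(2) yt lm] .
  have nfb: "\<not> nothing_forbidden_below D FF B" using u le unfolding nothing_forbidden_below_def by blast
  have ly0: "tlab t0 y = tlab t y"
    using local_changeD(5)[OF L yt local_changeD(8)[OF L yt step.hyps(2)]] .
  have others: "sim D AA t0 d t d" if d: "d \<in> children t x" "d \<noteq> y" for d
  proof (rule unchanged_sim[OF w o o0 L])
    have xd: "(x, d) \<in> tedges t" using d unfolding children_def by simp
    show "d \<in> tnodes t" using edge_nodes[OF tr xd] by simp
    show "d \<in> tnodes t0" using children_sub[OF tr0, of x] d chx by blast
    show "(d, m) \<notin> (tedges t)\<^sup>*" using path_child_unique[OF w o xd xy _ step.hyps(2)] d(2) by blast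
    show "d \<notin> C" using local_changeD(4)[OF L] uniq_parent[OF tr xd] xnm unfolding children_def by blast
  qed
  show ?case
    using sim_passes_to_child[OF o xt yc chx ly ly0 others nfb c1 c3] step.IH by blast
qed

lemma forbidden_step_not_sim:
  assumes w: "wf_dtd D" and o: "conforming D t" and FF: "FF \<subseteq> valid_set D" and dj: "AA \<inter> FF = {}"
    and v: "valid_upd op t" and mt: "op \<in> sem_uats D FF t" and ni: "\<not> iso (apply_upd op t) t"
    and c1: "star_condition D AA FF" and c2: "replace_condition D AA FF" and c3: "cycle_condition D AA FF"
  shows "conforming D (apply_upd op t) \<and> troot (apply_upd op t) = troot t
     \<and> \<not> sim D AA t (troot t) (apply_upd op t) (troot t)"
proof -
  obtain u where u: "u \<in> FF" "matches D t op u" using mt unfolding sem_uats_def by blast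
  have vu: "valid_uat D u" using FF u(1) unfolding valid_set_def by blast
  have uA: "u \<notin> AA" using u(1) dj by blast
  have rep: "\<forall>A X Y. u = URep A X Y \<longrightarrow> (X, Y) \<notin> (replace_graph D AA A)\<^sup>+"
    using c2 vu u(1) unfolding replace_condition_def forbidden_edges_def by fastforce
  obtain m C where E: "conforming D (apply_upd op t)" "local_change t (apply_upd op t) m C"
    "tlab t m = Elem (uat_elem u)" "\<not> sim D AA t m (apply_upd op t) m"
    using update_effect[where AA = AA, OF w o v u(2) vu] uA rep ni unfolding update_effect_def by blast
  have "(troot t, m) \<in> (tedges t)\<^sup>*"
    using is_treeD(6)[OF conformingD(1)[OF o] local_changeD(2)[OF E(2)]] .
  then show ?thesis
    using no_sim_above_change[OF w o E(1,2,3) u(1) E(4) c1 c3] E(1) local_changeD(1)[OF E(2)] by simp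
qed

text \<open>The \<open>if\<close> direction: an allowed sequence ends in a tree simulated by the original one, and an
  isomorphic copy of it would be simulated as well, which the forbidden update excludes.\<close>
lemma conditions_imp_consistent:
  assumes w: "wf_dtd D" and pol: "policy D AA FF"
    and c1: "star_condition D AA FF" and c2: "replace_condition D AA FF" and c3: "cycle_condition D AA FF"
  shows "consistent D AA FF"
  unfolding consistent_def
proof (intro notI, elim exE conjE)
  fix t ops op0
  assume tI: "t \<in> I_D D (d_rt D)" and al: "allowed D AA t ops"
    and m0: "op0 \<in> sem_uats D FF t" and v0: "valid_upd op0 t" and ni: "\<not> iso (apply_upd op0 t) t"
    and i: "iso (apply_seq ops t) (apply_upd op0 t)"
  have AA: "AA \<subseteq> valid_set D" and FF: "FF \<subseteq> valid_set D" and dj: "AA \<inter> FF = {}"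
    using pol unfolding policy_def by auto
  have o: "conforming D t" using I_D_conforming[OF tI] .
  have S: "conforming D (apply_seq ops t)" "troot (apply_seq ops t) = troot t"
    "sim D AA t (troot t) (apply_seq ops t) (troot t)" using allowed_seq_sim[OF w AA al o] by auto
  have F: "conforming D (apply_upd op0 t)" "troot (apply_upd op0 t) = troot t"
    "\<not> sim D AA t (troot t) (apply_upd op0 t) (troot t)"
    using forbidden_step_not_sim[OF w o FF dj v0 m0 ni c1 c2 c3] by auto
  have "sim D AA (apply_seq ops t) (troot t) (apply_upd op0 t) (troot t)"
    using iso_sim[OF w S(1) i conformingD(1)[OF F(1)]] S(2) F(2) by simp
  then show False using sim_trans[OF S(3)] F(3) by blast
qed

text \<open>Equality of trees up to the values of the label and value functions outside the node set.\<close>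
definition same_tree :: "'l xtree \<Rightarrow> 'l xtree \<Rightarrow> bool" where
  "same_tree t1 t2 \<longleftrightarrow> tnodes t1 = tnodes t2 \<and> troot t1 = troot t2 \<and> tedges t1 = tedges t2
     \<and> (\<forall>x\<in>tnodes t1. tlab t1 x = tlab t2 x \<and> tval t1 x = tval t2 x)"

lemma same_tree_refl: "same_tree t t" unfolding same_tree_def by simp
lemma same_tree_sym: "same_tree t1 t2 \<Longrightarrow> same_tree t2 t1" unfolding same_tree_def by auto
lemma same_tree_trans: "same_tree t1 t2 \<Longrightarrow> same_tree t2 t3 \<Longrightarrow> same_tree t1 t3"
  unfolding same_tree_def by auto

lemma same_tree_iso: "same_tree t1 t2 \<Longrightarrow> iso t1 t2"
  unfolding same_tree_def iso_def by (intro exI[of _ id]) auto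

lemma same_tree_ins: "same_tree T1 T2 \<Longrightarrow> same_tree (ins_tree T1 q s) (ins_tree T2 q s)"
  unfolding same_tree_def ins_tree_def by auto

lemma descendants_inserted:
  assumes eT: "tedges T \<subseteq> tnodes T \<times> tnodes T" and es: "tedges s \<subseteq> tnodes s \<times> tnodes s"
    and d: "tnodes s \<inter> tnodes T = {}" and q: "q \<in> tnodes T" and n: "n \<in> tnodes s"
  shows "{m. (n, m) \<in> (tedges (ins_tree T q s))\<^sup>*} = {m. (n, m) \<in> (tedges s)\<^sup>*}"
proof -
  let ?E = "tedges (ins_tree T q s)"
  have E: "?E = tedges T \<union> tedges s \<union> {(q, troot s)}" unfolding ins_tree_def by simp
  have "(n, m) \<in> (tedges s)\<^sup>*" if "(n, m) \<in> ?E\<^sup>*" for m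
    using that
  proof (induction rule: rtrancl_induct)
    case (step y z)
    have "y \<in> tnodes s" using step.IH n es by (induction rule: rtrancl_induct) auto
    then have "(y, z) \<in> tedges s" using step.hyps(2) E eT d q by blast
    then show ?case by (rule rtrancl_into_rtrancl[OF step.IH])
  qed simp
  moreover have "(tedges s)\<^sup>* \<subseteq> ?E\<^sup>*" using E by (intro rtrancl_mono) blast
  ultimately show ?thesis by blast
qed

lemma del_ins:
  assumes eT: "tedges T \<subseteq> tnodes T \<times> tnodes T" and te: "is_tree e"
    and d: "tnodes e \<inter> tnodes T = {}" and q: "q \<in> tnodes T"
  shows "same_tree (del_tree (ins_tree T q e) (troot e)) T"
proof -
  have re: "troot e \<in> tnodes e" using is_treeD(2)[OF te] .
  have "{m. (troot e, m) \<in> (tedges (ins_tree T q e))\<^sup>*} = tnodes e"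
    using descendants_inserted[OF eT is_treeD(3)[OF te] d q re] is_treeD(6)[OF te]
      edge_nodes[OF te] re by (auto elim: rtrancl_induct)
  moreover have "tedges (ins_tree T q e) \<inter> (tnodes T \<times> tnodes T) = tedges T"
    using eT is_treeD(3)[OF te] d q re unfolding ins_tree_def by auto
  ultimately show ?thesis using d unfolding del_tree_def Let_def same_tree_def
    by (auto simp: ins_tree_def)
qed

section \<open>Counting nodes: an isomorphism invariant\<close>

text \<open>The number of nodes whose label and (for strings) value satisfy \<open>P\<close>.  Isomorphic trees have
  the same counts, so a change of some count certifies that an update is non-trivial.\<close>
definition count_nodes :: "('l lab \<Rightarrow> string \<Rightarrow> bool) \<Rightarrow> 'l xtree \<Rightarrow> nat" where
  "count_nodes P t = card {x \<in> tnodes t. P (tlab t x) (if tlab t x = Str then tval t x else [])}"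

lemma same_tree_count: "same_tree t1 t2 \<Longrightarrow> count_nodes P t1 = count_nodes P t2"
  unfolding same_tree_def count_nodes_def by (metis (no_types, lifting) Collect_cong)

lemma iso_count:
  assumes "iso t1 t2"
  shows "count_nodes P t1 = count_nodes P t2"
proof -
  obtain f where f: "bij_betw f (tnodes t1) (tnodes t2)"
     "\<forall>x \<in> tnodes t1. tlab t2 (f x) = tlab t1 x"
     "\<forall>x \<in> tnodes t1. tlab t1 x = Str \<longrightarrow> tval t2 (f x) = tval t1 x"
    using assms unfolding iso_def by blast
  let ?Q1 = "\<lambda>x. P (tlab t1 x) (if tlab t1 x = Str then tval t1 x else [])"
  let ?Q2 = "\<lambda>x. P (tlab t2 x) (if tlab t2 x = Str then tval t2 x else [])"
  have Q: "\<And>x. x \<in> tnodes t1 \<Longrightarrow> ?Q2 (f x) = ?Q1 x" using f(2,3) by simp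
  have img: "f ` {x \<in> tnodes t1. ?Q1 x} = {y \<in> tnodes t2. ?Q2 y}"
  proof
    show "f ` {x \<in> tnodes t1. ?Q1 x} \<subseteq> {y \<in> tnodes t2. ?Q2 y}"
    proof
      fix y assume "y \<in> f ` {x \<in> tnodes t1. ?Q1 x}"
      then obtain x where x: "x \<in> tnodes t1" "?Q1 x" "y = f x" by blast
      have "?Q2 (f x)" using x(2) Q[OF x(1)] by (rule rev_iffD2)
      then show "y \<in> {y \<in> tnodes t2. ?Q2 y}" using bij_betwE[OF f(1)] x by blast
    qed
    show "{y \<in> tnodes t2. ?Q2 y} \<subseteq> f ` {x \<in> tnodes t1. ?Q1 x}"
    proof
      fix y assume y: "y \<in> {y \<in> tnodes t2. ?Q2 y}"
      then obtain x where x: "x \<in> tnodes t1" "y = f x" using bij_betw_imp_surj_on[OF f(1)] by blast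
      have "?Q2 (f x)" using y x(2) by blast
      then have "?Q1 x" using Q[OF x(1)] by (rule rev_iffD1)
      then show "y \<in> f ` {x \<in> tnodes t1. ?Q1 x}" using x by blast
    qed
  qed
  have "inj_on f {x \<in> tnodes t1. ?Q1 x}"
    by (rule inj_on_subset[OF bij_betw_imp_inj_on[OF f(1)]]) blast
  then have "card {x \<in> tnodes t1. ?Q1 x} = card (f ` {x \<in> tnodes t1. ?Q1 x})" by (simp add: card_image)
  then show ?thesis unfolding count_nodes_def img .
qed

lemma count_ins:
  assumes fT: "finite (tnodes T)" and fs: "finite (tnodes s)" and d: "tnodes s \<inter> tnodes T = {}"
  shows "count_nodes P (ins_tree T q s) = count_nodes P T + count_nodes P s"
proof -
  let ?Q = "\<lambda>t x. P (tlab t x) (if tlab t x = Str then tval t x else [])"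
  have "{x \<in> tnodes (ins_tree T q s). ?Q (ins_tree T q s) x} = {x \<in> tnodes T. ?Q T x} \<union> {x \<in> tnodes s. ?Q s x}"
    using d unfolding ins_tree_def by auto
  moreover have "{x \<in> tnodes T. ?Q T x} \<inter> {x \<in> tnodes s. ?Q s x} = {}" using d by auto
  ultimately show ?thesis unfolding count_nodes_def using fT fs by (simp add: card_Un_disjoint)
qed

lemma count_pos:
  assumes "finite (tnodes t)" "x \<in> tnodes t" "P (tlab t x) (if tlab t x = Str then tval t x else [])"
  shows "count_nodes P t > 0"
  unfolding count_nodes_def using assms by (auto simp: card_gt_0_iff)

lemma count_zero:
  assumes "\<forall>x\<in>tnodes t. \<not> P (tlab t x) (if tlab t x = Str then tval t x else [])"
  shows "count_nodes P t = 0"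
proof -
  have "{x \<in> tnodes t. P (tlab t x) (if tlab t x = Str then tval t x else [])} = {}" using assms by blast
  then show ?thesis unfolding count_nodes_def by (simp only: card.empty)
qed

text \<open>Documents of different types are told apart by counting the occurrences of the larger type.\<close>
lemma count_distinguishes_types:
  assumes w: "wf_dtd D" and eX: "eX \<in> I_D D X" and eY: "eY \<in> I_D D Y" and ne: "X \<noteq> Y"
  shows "\<exists>P. count_nodes P eX \<noteq> count_nodes P eY"
proof -
  have count_root: "count_nodes (\<lambda>L v. L = Elem Z) e > 0" if "e \<in> I_D D Z" for e Z
    using count_pos[OF I_D_finite[OF that] is_treeD(2)[OF I_D_tree[OF that]]] I_D_lab[OF that] by simp
  have count_above: "count_nodes (\<lambda>L v. L = Elem Z) e = 0" if "e \<in> I_D D Z'" "\<not> le_D D Z' Z" for e Z Z'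
    using labels_ge[OF that(1)] that(2) by (intro count_zero) auto
  show ?thesis
  proof (cases "le_D D Y X")
    case False
    then show ?thesis using count_root[OF eX] count_above[OF eY, of X] by (intro exI[of _ "\<lambda>L v. L = Elem X"]) simp
  next
    case True
    then have "\<not> le_D D X Y" using le_D_antisym[OF w] ne by blast
    then show ?thesis using count_root[OF eY] count_above[OF eX, of Y] by (intro exI[of _ "\<lambda>L v. L = Elem Y"]) simp
  qed
qed

definition fresh_docs :: "'l dtd \<Rightarrow> 'l \<Rightarrow> bool" where
  "fresh_docs D A \<longleftrightarrow> (\<forall>N. finite N \<longrightarrow> (\<exists>s\<in>I_D D A. tnodes s \<inter> N = {}))"

definition leaf :: "nat \<Rightarrow> 'l lab \<Rightarrow> 'l xtree" where
  "leaf k L = \<lparr>tnodes = {k}, tedges = {}, tlab = (\<lambda>_. L), troot = k, tval = (\<lambda>_. [])\<rparr>"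

lemma leaf_simps: "tnodes (leaf k L) = {k}" "tedges (leaf k L) = {}" "tlab (leaf k L) x = L"
  "troot (leaf k L) = k" "children (leaf k L) x = {}" "child_labels (leaf k L) x = {#}"
  unfolding leaf_def children_def child_labels_def by simp_all

lemma leaf_tree: "is_tree (leaf k L)"
  unfolding is_tree_def leaf_def by simp

lemma fresh_nat: "finite (N :: nat set) \<Longrightarrow> \<exists>k. k \<notin> N"
  using ex_new_if_finite[OF infinite_UNIV_nat] by blast

definition pre_doc :: "'l dtd \<Rightarrow> 'l \<Rightarrow> 'l list \<Rightarrow> 'l xtree \<Rightarrow> bool" where
  "pre_doc D X Cs T \<longleftrightarrow> is_tree T \<and> tlab T (troot T) = Elem X
     \<and> (\<forall>x\<in>tnodes T. x \<noteq> troot T \<longrightarrow> conforms_at D T x) \<and> child_labels T (troot T) = mset (map Elem Cs)"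

lemma pre_doc_exists:
  assumes finN: "finite N" and Cs: "\<forall>C \<in> set Cs. fresh_docs D C"
  shows "\<exists>T. pre_doc D X Cs T \<and> tnodes T \<inter> N = {}"
  using Cs
proof (induction Cs)
  case Nil
  obtain k where "k \<notin> N" using fresh_nat[OF finN] by blast
  then show ?case using leaf_tree unfolding pre_doc_def by (intro exI[of _ "leaf k (Elem X)"]) (simp add: leaf_simps)
next
  case (Cons C Cs)
  obtain T where T: "pre_doc D X Cs T" "tnodes T \<inter> N = {}" using Cons by auto
  have tT: "is_tree T" using T(1) unfolding pre_doc_def by simp
  have "finite (N \<union> tnodes T)" using finN is_treeD(1)[OF tT] by simp
  then obtain s where s: "s \<in> I_D D C" "tnodes s \<inter> (N \<union> tnodes T) = {}"
    using Cons.prems unfolding fresh_docs_def by auto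
  have r: "troot T \<in> tnodes T" using is_treeD(2)[OF tT] .
  interpret I: insertion T s "troot T" using tT I_D_tree[OF s(1)] r s(2) by unfold_locales auto
  have "pre_doc D X (C # Cs) (ins_tree T (troot T) s)"
    using T(1) I.is_tree I.lab_t[OF r] I.simps(1,2) I.conf_t I.conf_s I.child_labels_t[OF r] I_D_lab[OF s(1)]
      conformingD(2)[OF I_D_conforming[OF s(1)]] unfolding pre_doc_def by auto
  moreover have "tnodes (ins_tree T (troot T) s) \<inter> N = {}" using I.simps(1) T(2) s(2) by blast
  ultimately show ?case by blast
qed

lemma pre_doc_attach:
  assumes T: "pre_doc D X Cs T" and X: "X \<in> d_ele D" and s: "s \<in> I_D D Y"
    and d: "tnodes s \<inter> tnodes T = {}" and wo: "word_ok (d_rg D X) (mset (map Elem Cs) + {#Elem Y#})"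
  shows "ins_tree T (troot T) s \<in> I_D D X"
proof -
  have tT: "is_tree T" and r: "troot T \<in> tnodes T" using T is_treeD(2) unfolding pre_doc_def by auto
  interpret I: insertion T s "troot T" using tT I_D_tree[OF s] r d by unfold_locales
  have "conforms_at D (ins_tree T (troot T) s) (troot T)"
    using T I.child_labels_t[OF r] I.lab_t[OF r] I_D_lab[OF s] wo X
    unfolding pre_doc_def conforms_at_def by simp
  then have "conforming D (ins_tree T (troot T) s)"
    using I.conforming T conformingD(2)[OF I_D_conforming[OF s]] unfolding pre_doc_def by blast
  then show ?thesis using T I.lab_t[OF r] I.simps(2) unfolding I_D_iff pre_doc_def by simp
qed

lemma str_doc_exists:
  assumes A: "A \<in> d_ele D" and rg: "d_rg D A = RStr" and finN: "finite N"
  shows "\<exists>s\<in>I_D D A. tnodes s \<inter> N = {}"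
proof -
  obtain k where k: "k \<notin> N" using fresh_nat[OF finN] by blast
  obtain k' where k': "k' \<notin> N \<union> {k}" using fresh_nat finN by (meson finite_insert finite_Un finite.emptyI)
  interpret I: insertion "leaf k (Elem A)" "leaf k' Str" k
    using leaf_tree k' by unfold_locales (auto simp: leaf_simps)
  let ?T = "ins_tree (leaf k (Elem A)) k (leaf k' Str)"
  have kk: "k' \<noteq> k" using k' by simp
  have "child_labels ?T k = {#Str#}" using I.child_labels_t[of k] kk by (simp add: leaf_simps)
  then have "conforms_at D ?T k" unfolding conforms_at_def using I.simps(5) kk rg A by (simp add: leaf_simps)
  moreover have "conforms_at D ?T k'"
    using I.children_s[of k'] I.simps(4) unfolding conforms_at_def by (simp add: leaf_simps)
  ultimately have "conforming D ?T" using I.is_tree I.simps(1) unfolding conforming_def by (auto simp: leaf_simps)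
  then have T: "?T \<in> I_D D A" using I.simps(2,5) kk unfolding I_D_iff by (simp add: leaf_simps)
  have "tnodes ?T \<inter> N = {}" using k k' I.simps(1) by (auto simp: leaf_simps)
  then show ?thesis using T by blast
qed

lemma wf_conv: "wf_dtd D \<Longrightarrow> wf ((sub_rel D)\<inverse>)"
proof -
  assume w: "wf_dtd D"
  have "finite (sub_rel D)" using sub_rel_sub[OF w] w unfolding wf_dtd_def
    by (meson finite_SigmaI finite_subset)
  moreover have "acyclic (sub_rel D)" using w unfolding wf_dtd_def by simp
  ultimately show ?thesis using finite_acyclic_wf_converse by blast
qed

text \<open>Every element type has documents with fresh nodes (by well-founded induction along the acyclic
  subelement relation, choosing a shortest word of each content model).\<close>
lemma fresh_docs_exist:
  assumes w: "wf_dtd D"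
  shows "A \<in> d_ele D \<Longrightarrow> fresh_docs D A"
proof (induction A rule: wf_induct_rule[OF wf_conv[OF w]])
  case (1 A)
  have sub: "\<forall>C \<in> set Cs. fresh_docs D C" if Cs: "set Cs \<subseteq> subs (d_rg D A)" for Cs
  proof
    fix C assume "C \<in> set Cs"
    then have C: "C \<in> subs (d_rg D A)" using Cs by blast
    then have "(C, A) \<in> (sub_rel D)\<inverse>" using sub_rel_I[OF 1(2)] by simp
    then show "fresh_docs D C" using 1(1) subs_ele[OF w 1(2) C] by blast
  qed
  have mk: "\<exists>s\<in>I_D D A. tnodes s \<inter> N = {}"
    if N: "finite N" and Cs: "set Cs \<subseteq> subs (d_rg D A)" and wo: "word_ok (d_rg D A) (mset (map Elem Cs))"
    for N Cs
  proof -
    obtain T where T: "pre_doc D A Cs T" "tnodes T \<inter> N = {}"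
      using pre_doc_exists[OF N sub[OF Cs]] by blast
    have "conforms_at D T (troot T)" using T(1) 1(2) wo unfolding pre_doc_def conforms_at_def by simp
    then have "conforming D T" using T(1) unfolding pre_doc_def conforming_def by fastforce
    then have "T \<in> I_D D A" using T(1) unfolding pre_doc_def I_D_iff by simp
    then show ?thesis using T(2) by blast
  qed
  have rok: "rg_ok (d_rg D A)" using w 1(2) unfolding wf_dtd_def by blast
  show ?case unfolding fresh_docs_def
  proof (intro allI impI)
    fix N :: "nat set" assume N: "finite N"
    show "\<exists>s\<in>I_D D A. tnodes s \<inter> N = {}"
    proof (cases "d_rg D A")
      case RStr then show ?thesis using str_doc_exists[OF 1(2) _ N] by simp
    next
      case REps then show ?thesis using mk[OF N, of "[]"] by simp
    next
      case (RConc Bs) then show ?thesis using mk[OF N, of Bs] by simp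
    next
      case (RDisj Bs) then show ?thesis using rok mk[OF N, of "[hd Bs]"] by simp
    next
      case (RStar B) then show ?thesis using mk[OF N, of "[]"] by simp
    qed
  qed
qed

lemma attach:
  assumes w: "wf_dtd D" and XY: "(X, Y) \<in> sub_rel D" and s: "s \<in> I_D D Y" and finN: "finite N"
  shows "\<exists>T. is_tree T \<and> tnodes T \<inter> (N \<union> tnodes s) = {} \<and> ins_tree T (troot T) s \<in> I_D D X"
proof -
  have X: "X \<in> d_ele D" and Y: "Y \<in> subs (d_rg D X)" using XY unfolding sub_rel_def by auto
  obtain Cs where Cs: "set Cs \<subseteq> subs (d_rg D X)"
    and wo: "word_ok (d_rg D X) (mset (map Elem Cs) + {#Elem Y#})"
  proof (cases "d_rg D X")
    case (RConc Bs)
    then have YB: "Y \<in> set Bs" using Y by simp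
    have e1: "add_mset Y (mset (remove1 Y Bs)) = mset Bs" using YB by (simp add: insert_DiffM)
    have "mset (map Elem (remove1 Y Bs)) + {#Elem Y#} = image_mset Elem (add_mset Y (mset (remove1 Y Bs)))"
      by simp
    also have "\<dots> = mset (map Elem Bs)" using e1 by simp
    finally have "mset (map Elem (remove1 Y Bs)) + {#Elem Y#} = mset (map Elem Bs)" .
    then show ?thesis using that[of "remove1 Y Bs"] RConc by (simp add: set_remove1_subset)
  next
    case (RDisj Bs) then show ?thesis using that[of "[]"] Y by simp
  next
    case (RStar B) then show ?thesis using that[of "[]"] Y by simp
  qed (use Y in simp_all)
  have fresh: "\<forall>C\<in>set Cs. fresh_docs D C" using Cs fresh_docs_exist[OF w] subs_ele[OF w X] by blast
  have "finite (N \<union> tnodes s)" using finN I_D_finite[OF s] by simp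
  then obtain T where T: "pre_doc D X Cs T" "tnodes T \<inter> (N \<union> tnodes s) = {}"
    using pre_doc_exists[OF _ fresh] by blast
  have d: "tnodes s \<inter> tnodes T = {}" using T(2) by blast
  have "is_tree T" using T(1) unfolding pre_doc_def by simp
  then show ?thesis using pre_doc_attach[OF T(1) X s d wo] T(2) by blast
qed

lemma doc_with_node:
  assumes w: "wf_dtd D"
  shows "(X, A) \<in> (sub_rel D)\<^sup>* \<Longrightarrow> X \<in> d_ele D \<Longrightarrow> finite N \<Longrightarrow>
    \<exists>t\<in>I_D D X. tnodes t \<inter> N = {} \<and> (\<exists>q\<in>tnodes t. tlab t q = Elem A)"
proof (induction arbitrary: N rule: converse_rtrancl_induct)
  case base
  obtain t where t: "t \<in> I_D D A" "tnodes t \<inter> N = {}"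
    using fresh_docs_exist[OF w base(1)] base(2) unfolding fresh_docs_def by blast
  then show ?case using is_treeD(2)[OF I_D_tree[OF t(1)]] I_D_lab[OF t(1)] by blast
next
  case (step X Y)
  have Y: "Y \<in> d_ele D" using step.hyps(1) sub_rel_sub[OF w] by blast
  obtain tY q where tY: "tY \<in> I_D D Y" "tnodes tY \<inter> N = {}" "q \<in> tnodes tY" "tlab tY q = Elem A"
    using step.IH[OF Y step.prems(2)] by blast
  obtain T where T: "is_tree T" "tnodes T \<inter> (N \<union> tnodes tY) = {}" "ins_tree T (troot T) tY \<in> I_D D X"
    using attach[OF w step.hyps(1) tY(1) step.prems(2)] by blast
  have "tnodes (ins_tree T (troot T) tY) \<inter> N = {}" using T(2) tY(2) by (auto simp: ins_tree_def)
  moreover have "q \<in> tnodes (ins_tree T (troot T) tY)" "tlab (ins_tree T (troot T) tY) q = Elem A"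
    using tY(3,4) by (auto simp: ins_tree_def)
  ultimately show ?case using T(3) by blast
qed

lemma root_doc_with_node:
  assumes w: "wf_dtd D" and A: "A \<in> d_ele D" and finN: "finite N"
  shows "\<exists>T\<in>I_D D (d_rt D). tnodes T \<inter> N = {} \<and> (\<exists>q\<in>tnodes T. tlab T q = Elem A)"
proof -
  have "le_D D (d_rt D) A" and "d_rt D \<in> d_ele D" using w A unfolding wf_dtd_def by auto
  then show ?thesis using doc_with_node[OF w _ _ finN] unfolding le_D_def by blast
qed

lemma comm_ins:
  assumes "tnodes e \<inter> tnodes T = {}" "tnodes e \<inter> tnodes s = {}" "tnodes s \<inter> tnodes T = {}"
  shows "same_tree (ins_tree (ins_tree T q s) n e) (ins_tree T q (ins_tree s n e))"
  using assms unfolding same_tree_def ins_tree_def by auto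

lemma comm_str:
  assumes "n \<in> tnodes s"
  shows "same_tree ((ins_tree T q s)\<lparr>tval := (tval (ins_tree T q s))(n := v)\<rparr>)
    (ins_tree T q (s\<lparr>tval := (tval s)(n := v)\<rparr>))"
  using assms unfolding same_tree_def ins_tree_def by auto

lemma comm_del:
  assumes eT: "tedges T \<subseteq> tnodes T \<times> tnodes T" and ts: "is_tree s" and d: "tnodes s \<inter> tnodes T = {}"
    and q: "q \<in> tnodes T" and n: "n \<in> tnodes s" and nr: "n \<noteq> troot s"
  shows "same_tree (del_tree (ins_tree T q s) n) (ins_tree T q (del_tree s n))"
proof -
  interpret Dl: deletion s n using ts n nr by unfold_locales
  have De: "{m. (n, m) \<in> (tedges (ins_tree T q s))\<^sup>*} = Dl.subtree"
    using descendants_inserted[OF eT is_treeD(3)[OF ts] d q n] unfolding Dl.subtree_def .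
  have sub: "Dl.subtree \<subseteq> tnodes s" using Dl.kept_sub Dl.root_kept n
    unfolding Dl.kept_def Dl.subtree_def by (auto elim: rtrancl_induct dest: edge_nodes[OF ts])
  have nodes: "tnodes (ins_tree T q s) - Dl.subtree = tnodes T \<union> Dl.kept"
    using sub d unfolding Dl.kept_def ins_tree_def by auto
  have edges: "tedges (ins_tree T q s) \<inter> (tnodes T \<union> Dl.kept) \<times> (tnodes T \<union> Dl.kept)
     = tedges T \<union> (tedges s \<inter> Dl.kept \<times> Dl.kept) \<union> {(q, troot s)}"
    using eT is_treeD(3)[OF ts] d q Dl.root_kept Dl.kept_sub unfolding ins_tree_def by auto
  show ?thesis using d Dl.kept_sub unfolding same_tree_def del_tree_def Let_def De nodes edges
    by (auto simp: ins_tree_def Dl.kept_def Dl.subtree_def)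
qed

fun upd_node :: "'l upd \<Rightarrow> nat" where
  "upd_node (Insert n e) = n" | "upd_node (Delete n) = n" | "upd_node (ReplaceT n e) = n"
| "upd_node (ReplaceS n v) = n"

fun new_nodes :: "'l upd \<Rightarrow> nat set" where
  "new_nodes (Insert n e) = tnodes e" | "new_nodes (Delete n) = {}" | "new_nodes (ReplaceT n e) = tnodes e"
| "new_nodes (ReplaceS n v) = {}"

lemma nodes_apply: "tnodes (apply_upd op s) \<subseteq> tnodes s \<union> new_nodes op"
  by (cases op) (auto simp: ins_tree_def del_tree_def Let_def)

text \<open>A visible update of \<open>s\<close>: it matches \<open>u\<close>, brings in only nodes outside \<open>N\<close> and \<open>s\<close>, and changes
  some node count, hence stays non-trivial in every context.\<close>
definition visible_update :: "'l dtd \<Rightarrow> 'l uat \<Rightarrow> nat set \<Rightarrow> 'l xtree \<Rightarrow> 'l upd \<Rightarrow> bool" where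
  "visible_update D u N s op \<longleftrightarrow> valid_upd op s \<and> matches D s op u \<and> new_nodes op \<inter> (N \<union> tnodes s) = {}
     \<and> (\<exists>P. count_nodes P (apply_upd op s) \<noteq> count_nodes P s) \<and> upd_node op \<in> tnodes s
     \<and> finite (new_nodes op)"

lemma visible_update_nontrivial: "visible_update D u N t op \<Longrightarrow> \<not> iso (apply_upd op t) t"
  unfolding visible_update_def using iso_count by metis

lemma parent_labelled_ins:
  assumes ts: "is_tree s" and d: "tnodes s \<inter> tnodes T = {}" and pl: "parent_labelled s n A"
  shows "parent_labelled (ins_tree T q s) n A"
proof -
  obtain p where p: "(p, n) \<in> tedges s" "tlab s p = Elem A" using pl unfolding parent_labelled_def by blast
  have "p \<in> tnodes s" using edge_nodes[OF ts p(1)] by simp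
  then show ?thesis using p d unfolding parent_labelled_def by (auto simp: ins_tree_def)
qed

lemma parent_labelled_not_root: "is_tree s \<Longrightarrow> parent_labelled s n A \<Longrightarrow> n \<noteq> troot s"
  unfolding parent_labelled_def using is_treeD(4) by blast

lemma apply_upd_in_context:
  assumes ts: "is_tree s" and tT: "is_tree T" and d: "tnodes s \<inter> tnodes T = {}" and q: "q \<in> tnodes T"
    and v: "valid_upd op s" and m: "matches D s op u" and fr: "new_nodes op \<inter> tnodes T = {}"
  shows "same_tree (apply_upd op (ins_tree T q s)) (ins_tree T q (apply_upd op s))"
proof (cases op)
  case (Insert n e)
  have "tnodes e \<inter> tnodes T = {}" "tnodes e \<inter> tnodes s = {}" using fr v Insert by auto
  then show ?thesis using comm_ins d Insert by simp
next
  case (Delete n)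
  have "n \<noteq> troot s" using m Delete parent_labelled_not_root[OF ts] by (cases u) auto
  then show ?thesis using comm_del[OF is_treeD(3)[OF tT] ts d q] v Delete by simp
next
  case (ReplaceT n e)
  have pl: "\<exists>A. parent_labelled s n A" using m ReplaceT by (cases u) auto
  then have nr: "n \<noteq> troot s" using parent_labelled_not_root[OF ts] by blast
  from pl obtain A where "parent_labelled s n A" ..
  then obtain p where p: "(p, n) \<in> tedges s" unfolding parent_labelled_def by blast
  have ns: "n \<in> tnodes s" using v ReplaceT by simp
  interpret I: insertion T s q using tT ts q d by unfold_locales
  have par: "parent (ins_tree T q s) n = p" "parent s n = p"
    using parent_eq[OF I.is_tree] parent_eq[OF ts p] p by (auto simp: ins_tree_def)
  have de: "tnodes e \<inter> tnodes T = {}" "tnodes e \<inter> tnodes s = {}" using fr v ReplaceT by auto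
  have e1: "same_tree (ins_tree (del_tree (ins_tree T q s) n) p e) (ins_tree (ins_tree T q (del_tree s n)) p e)"
    using same_tree_ins[OF comm_del[OF is_treeD(3)[OF tT] ts d q ns nr]] .
  have e2: "same_tree (ins_tree (ins_tree T q (del_tree s n)) p e) (ins_tree T q (ins_tree (del_tree s n) p e))"
    by (rule comm_ins) (use de d in \<open>auto simp: del_tree_def Let_def\<close>)
  show ?thesis using same_tree_trans[OF e1 e2] ReplaceT par by simp
next
  case (ReplaceS n v)
  then show ?thesis using comm_str v by simp
qed

lemma visible_update_in_context:
  assumes ts: "is_tree s" and tT: "is_tree T" and d: "tnodes s \<inter> tnodes T = {}"
    and q: "q \<in> tnodes T" and g: "visible_update D u N s op" and fr: "new_nodes op \<inter> tnodes T = {}"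
  shows "visible_update D u N (ins_tree T q s) op"
    "same_tree (apply_upd op (ins_tree T q s)) (ins_tree T q (apply_upd op s))"
proof -
  have g1: "valid_upd op s" "matches D s op u" "new_nodes op \<inter> (N \<union> tnodes s) = {}"
     "\<exists>P. count_nodes P (apply_upd op s) \<noteq> count_nodes P s" "upd_node op \<in> tnodes s"
     "finite (new_nodes op)"
    using g unfolding visible_update_def by auto
  show E: "same_tree (apply_upd op (ins_tree T q s)) (ins_tree T q (apply_upd op s))"
    using apply_upd_in_context[OF ts tT d q g1(1,2) fr] .
  have nodes: "tnodes (ins_tree T q s) = tnodes T \<union> tnodes s" by (simp add: ins_tree_def)
  have labs: "\<And>x. x \<in> tnodes s \<Longrightarrow> tlab (ins_tree T q s) x = tlab s x" by (simp add: ins_tree_def)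
  have valid: "valid_upd op (ins_tree T q s)" using g1(1) fr nodes by (cases op) auto
  have match: "matches D (ins_tree T q s) op u"
    using g1(2,5) labs parent_labelled_ins[OF ts d] by (cases op; cases u) auto
  have fin: "finite (tnodes T)" "finite (tnodes s)" using is_treeD(1) tT ts by auto
  have fa: "finite (tnodes (apply_upd op s))" using nodes_apply fin g1(6) finite_subset by blast
  have da: "tnodes (apply_upd op s) \<inter> tnodes T = {}" using nodes_apply d fr by blast
  obtain P where P: "count_nodes P (apply_upd op s) \<noteq> count_nodes P s" using g1(4) by blast
  have "count_nodes P (apply_upd op (ins_tree T q s)) = count_nodes P T + count_nodes P (apply_upd op s)"
    using same_tree_count[OF E] count_ins[OF fin(1) fa da] by simp
  moreover have "count_nodes P (ins_tree T q s) = count_nodes P T + count_nodes P s"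
    using count_ins[OF fin d] .
  ultimately have "count_nodes P (apply_upd op (ins_tree T q s)) \<noteq> count_nodes P (ins_tree T q s)"
    using P by simp
  then show "visible_update D u N (ins_tree T q s) op"
    unfolding visible_update_def using valid match g1(3,5,6) fr nodes by auto
qed

lemma fresh_doc:
  assumes w: "wf_dtd D" and A: "A \<in> d_ele D" and N: "finite N"
  obtains s where "s \<in> I_D D A" "tnodes s \<inter> N = {}"
  using fresh_docs_exist[OF w A] N unfolding fresh_docs_def by blast

definition visible_docs :: "'l dtd \<Rightarrow> 'l uat \<Rightarrow> 'l \<Rightarrow> bool" where
  "visible_docs D u C \<longleftrightarrow> (\<forall>N. finite N \<longrightarrow>
     (\<exists>s\<in>I_D D C. tnodes s \<inter> N = {} \<and> (\<exists>op. visible_update D u N s op)))"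

lemma visible_insert:
  assumes w: "wf_dtd D" and C: "C \<in> d_ele D" and rg: "d_rg D C = RStar E"
  shows "visible_docs D (UIns C E) C"
  unfolding visible_docs_def
proof (intro allI impI)
  fix N :: "nat set" assume finN: "finite N"
  obtain s where s: "s \<in> I_D D C" "tnodes s \<inter> N = {}" using fresh_doc[OF w C finN] .
  have E: "E \<in> d_ele D" using subs_ele[OF w C] rg by simp
  have "finite (N \<union> tnodes s)" using finN I_D_finite[OF s(1)] by simp
  then obtain e where e: "e \<in> I_D D E" "tnodes e \<inter> (N \<union> tnodes s) = {}" by (rule fresh_doc[OF w E])
  let ?op = "Insert (troot s) e"
  let ?P = "\<lambda>(L::'a lab) (v::string). True"
  have rs: "troot s \<in> tnodes s" using is_treeD(2)[OF I_D_tree[OF s(1)]] .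
  have d: "tnodes e \<inter> tnodes s = {}" using e(2) by blast
  have "count_nodes ?P (apply_upd ?op s) = count_nodes ?P s + count_nodes ?P e"
    using count_ins[OF I_D_finite[OF s(1)] I_D_finite[OF e(1)] d] by simp
  moreover have "count_nodes ?P e > 0"
    using count_pos[OF I_D_finite[OF e(1)] is_treeD(2)[OF I_D_tree[OF e(1)]]] by simp
  ultimately have "\<exists>P. count_nodes P (apply_upd ?op s) \<noteq> count_nodes P s" by (intro exI[of _ ?P]) simp
  moreover have "matches D s ?op (UIns C E)" using I_D_lab[OF s(1)] e(1) by simp
  ultimately have "visible_update D (UIns C E) N s ?op"
    unfolding visible_update_def using rs d e(2) I_D_finite[OF e(1)] by simp
  then show "\<exists>s\<in>I_D D C. tnodes s \<inter> N = {} \<and> (\<exists>op. visible_update D (UIns C E) N s op)"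
    using s by blast
qed

lemma visible_delete:
  assumes w: "wf_dtd D" and C: "C \<in> d_ele D" and rg: "d_rg D C = RStar E"
  shows "visible_docs D (UDel C E) C"
  unfolding visible_docs_def
proof (intro allI impI)
  fix N :: "nat set" assume finN: "finite N"
  obtain s0 where s0: "s0 \<in> I_D D C" "tnodes s0 \<inter> N = {}" using fresh_doc[OF w C finN] .
  have E: "E \<in> d_ele D" using subs_ele[OF w C] rg by simp
  have "finite (N \<union> tnodes s0)" using finN I_D_finite[OF s0(1)] by simp
  then obtain e where e: "e \<in> I_D D E" "tnodes e \<inter> (N \<union> tnodes s0) = {}" by (rule fresh_doc[OF w E])
  have ts: "is_tree s0" and te: "is_tree e" using I_D_tree[OF s0(1)] I_D_tree[OF e(1)] .
  have d: "tnodes e \<inter> tnodes s0 = {}" using e(2) by blast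
  have r0: "troot s0 \<in> tnodes s0" using is_treeD(2)[OF ts] .
  have l0: "tlab s0 (troot s0) = Elem C" using I_D_lab[OF s0(1)] .
  interpret I: insertion s0 e "troot s0" using ts te r0 d by unfold_locales
  let ?s = "ins_tree s0 (troot s0) e"
  have sI: "?s \<in> I_D D C" unfolding I_D_iff
    using insert_conforming[OF I_D_conforming[OF s0(1)] r0 d e(1) l0 rg] I.simps(2) I.lab_t[OF r0] l0 by simp
  have fr: "tnodes ?s \<inter> N = {}" unfolding I.simps(1) using s0(2) e(2) by blast
  let ?op = "Delete (troot e)"
  let ?P = "\<lambda>(L::'a lab) (v::string). True"
  have re: "troot e \<in> tnodes e" using is_treeD(2)[OF te] .
  have "count_nodes ?P (apply_upd ?op ?s) = count_nodes ?P s0"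
    using same_tree_count[OF del_ins[OF is_treeD(3)[OF ts] te d r0]] by simp
  moreover have "count_nodes ?P ?s = count_nodes ?P s0 + count_nodes ?P e"
    using count_ins[OF I_D_finite[OF s0(1)] I_D_finite[OF e(1)] d] .
  moreover have "count_nodes ?P e > 0" using count_pos[OF I_D_finite[OF e(1)] re] by simp
  ultimately have "\<exists>P. count_nodes P (apply_upd ?op ?s) \<noteq> count_nodes P ?s"
    by (intro exI[of _ ?P]) simp
  moreover have "(troot s0, troot e) \<in> tedges ?s" by (simp add: ins_tree_def)
  then have "parent_labelled ?s (troot e) C"
    unfolding parent_labelled_def using I.lab_t[OF r0] l0 by auto
  ultimately have "visible_update D (UDel C E) N ?s ?op"
    unfolding visible_update_def using I.simps(1,4) re I_D_lab[OF e(1)] by simp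
  then show "\<exists>s\<in>I_D D C. tnodes s \<inter> N = {} \<and> (\<exists>op. visible_update D (UDel C E) N s op)"
    using sI fr by blast
qed

lemma replace_changes_count:
  assumes w: "wf_dtd D" and tT: "is_tree T" and q: "q \<in> tnodes T"
    and eX: "eX \<in> I_D D X" and eY: "eY \<in> I_D D Y" and ne: "X \<noteq> Y"
    and d1: "tnodes eX \<inter> tnodes T = {}" and d2: "tnodes eY \<inter> tnodes T = {}"
  shows "\<exists>P. count_nodes P (ins_tree (del_tree (ins_tree T q eX) (troot eX)) q eY)
    \<noteq> count_nodes P (ins_tree T q eX)"
proof -
  obtain P where P: "count_nodes P eX \<noteq> count_nodes P eY" using count_distinguishes_types[OF w eX eY ne] by blast
  have e: "same_tree (ins_tree (del_tree (ins_tree T q eX) (troot eX)) q eY) (ins_tree T q eY)"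
    using same_tree_ins[OF del_ins[OF is_treeD(3)[OF tT] I_D_tree[OF eX] d1 q]] .
  have fT: "finite (tnodes T)" using is_treeD(1)[OF tT] .
  have "count_nodes P (ins_tree (del_tree (ins_tree T q eX) (troot eX)) q eY) = count_nodes P T + count_nodes P eY"
    using same_tree_count[OF e] count_ins[OF fT I_D_finite[OF eY] d2] by simp
  moreover have "count_nodes P (ins_tree T q eX) = count_nodes P T + count_nodes P eX"
    using count_ins[OF fT I_D_finite[OF eX] d1] .
  ultimately show ?thesis using P by (intro exI[of _ P]) simp
qed

lemma visible_replace:
  assumes w: "wf_dtd D" and C: "C \<in> d_ele D" and rg: "d_rg D C = RDisj Bs" and X: "X \<in> set Bs"
    and Y: "Y \<in> set Bs" and ne: "X \<noteq> Y"
  shows "visible_docs D (URep C X Y) C"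
  unfolding visible_docs_def
proof (intro allI impI)
  fix N :: "nat set" assume finN: "finite N"
  have Xe: "X \<in> d_ele D" and Ye: "Y \<in> d_ele D" using subs_ele[OF w C] rg X Y by auto
  have CX: "(C, X) \<in> sub_rel D" using sub_rel_I[OF C] rg X by simp
  obtain eX where eX: "eX \<in> I_D D X" "tnodes eX \<inter> N = {}" using fresh_doc[OF w Xe finN] .
  obtain T where T: "is_tree T" "tnodes T \<inter> (N \<union> tnodes eX) = {}" "ins_tree T (troot T) eX \<in> I_D D C"
    using attach[OF w CX eX(1) finN] by blast
  let ?s = "ins_tree T (troot T) eX"
  have sN: "tnodes ?s = tnodes T \<union> tnodes eX" by (simp add: ins_tree_def)
  have "finite (N \<union> tnodes ?s)" using finN is_treeD(1)[OF T(1)] I_D_finite[OF eX(1)] sN by simp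
  then obtain eY where eY: "eY \<in> I_D D Y" "tnodes eY \<inter> (N \<union> tnodes ?s) = {}" by (rule fresh_doc[OF w Ye])
  have rT: "troot T \<in> tnodes T" using is_treeD(2)[OF T(1)] .
  have rX: "troot eX \<in> tnodes eX" using is_treeD(2)[OF I_D_tree[OF eX(1)]] .
  have d1: "tnodes eX \<inter> tnodes T = {}" using T(2) by blast
  have d2: "tnodes eY \<inter> tnodes T = {}" using eY(2) unfolding sN by blast
  let ?op = "ReplaceT (troot eX) eY"
  interpret I: insertion T eX "troot T" using T(1) I_D_tree[OF eX(1)] rT d1 by unfold_locales
  have edge: "(troot T, troot eX) \<in> tedges ?s" by (simp add: ins_tree_def)
  have ap: "apply_upd ?op ?s = ins_tree (del_tree ?s (troot eX)) (troot T) eY"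
    using parent_eq[OF I.is_tree edge] by simp
  have "\<exists>P. count_nodes P (apply_upd ?op ?s) \<noteq> count_nodes P ?s"
    using replace_changes_count[OF w T(1) rT eX(1) eY(1) ne d1 d2] unfolding ap .
  moreover have "parent_labelled ?s (troot eX) C"
    unfolding parent_labelled_def using edge I_D_lab[OF T(3)] I.simps(2) by auto
  moreover have "tlab ?s (troot eX) = Elem X" using I.simps(4)[OF rX] I_D_lab[OF eX(1)] by simp
  ultimately have "visible_update D (URep C X Y) N ?s ?op"
    unfolding visible_update_def using sN rX eY I_D_finite[OF eY(1)] ne by auto
  moreover have "tnodes ?s \<inter> N = {}" unfolding sN using T(2) eX(2) by blast
  ultimately show "\<exists>s\<in>I_D D C. tnodes s \<inter> N = {} \<and> (\<exists>op. visible_update D (URep C X Y) N s op)"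
    using T(3) by blast
qed

lemma visible_replace_str:
  assumes w: "wf_dtd D" and C: "C \<in> d_ele D" and rg: "d_rg D C = RStr"
  shows "visible_docs D (URepStr C) C"
  unfolding visible_docs_def
proof (intro allI impI)
  fix N :: "nat set" assume finN: "finite N"
  obtain s where s: "s \<in> I_D D C" "tnodes s \<inter> N = {}" using fresh_doc[OF w C finN] .
  have ts: "is_tree s" and os: "conforming D s" using I_D_tree[OF s(1)] I_D_conforming[OF s(1)] .
  have r: "troot s \<in> tnodes s" using is_treeD(2)[OF ts] .
  have l: "tlab s (troot s) = Elem C" using I_D_lab[OF s(1)] .
  obtain n where cs: "children s (troot s) = {n}"
    using single_child[OF conformingD(2)[OF os r] l] rg by blast
  then have n: "n \<in> children s (troot s)" by simp
  have ln: "tlab s n = Str" using children_str[OF ts conformingD(2)[OF os r] l rg n] by simp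
  have e: "(troot s, n) \<in> tedges s" using n unfolding children_def by simp
  have nt: "n \<in> tnodes s" using edge_nodes[OF ts e] by simp
  let ?v = "CHR ''a'' # tval s n"
  let ?op = "ReplaceS n ?v"
  let ?P = "\<lambda>L v. L = Str \<and> v = tval s n"
  define S where "S = {x \<in> tnodes s. ?P (tlab s x) (if tlab s x = Str then tval s x else [])}"
  have "count_nodes ?P (apply_upd ?op s) = card (S - {n})"
    unfolding count_nodes_def S_def by (rule arg_cong[where f = card]) auto
  moreover have "count_nodes ?P s = card S" unfolding count_nodes_def S_def by simp
  moreover have "card (S - {n}) < card S"
    by (rule card_Diff1_less) (use nt ln I_D_finite[OF s(1)] in \<open>auto simp: S_def\<close>)
  ultimately have "count_nodes ?P (apply_upd ?op s) < count_nodes ?P s" by simp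
  then have "\<exists>P. count_nodes P (apply_upd ?op s) \<noteq> count_nodes P s" by (intro exI[of _ ?P]) simp
  moreover have "parent_labelled s n C" unfolding parent_labelled_def using e l by blast
  ultimately have "visible_update D (URepStr C) N s ?op" unfolding visible_update_def using nt ln by simp
  then show "\<exists>s\<in>I_D D C. tnodes s \<inter> N = {} \<and> (\<exists>op. visible_update D (URepStr C) N s op)"
    using s by blast
qed

lemma visible_docs_exist:
  assumes w: "wf_dtd D" and vu: "valid_uat D u"
  shows "visible_docs D u (uat_elem u)"
proof (cases u)
  case (UIns C E) then show ?thesis using visible_insert[OF w] vu by simp
next
  case (UDel C E) then show ?thesis using visible_delete[OF w] vu by simp
next
  case (URep C X Y)
  then obtain Bs where "C \<in> d_ele D" "X \<noteq> Y" "d_rg D C = RDisj Bs" "X \<in> set Bs" "Y \<in> set Bs"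
    using vu by auto
  then show ?thesis using visible_replace[OF w] URep by simp
next
  case (URepStr C) then show ?thesis using visible_replace_str[OF w] vu by simp
qed

lemma visible_docs_lift:
  assumes w: "wf_dtd D" and C: "visible_docs D u C"
  shows "(B, C) \<in> (sub_rel D)\<^sup>* \<Longrightarrow> visible_docs D u B"
proof (induction rule: converse_rtrancl_induct)
  case base then show ?case using C .
next
  case (step X Y)
  show ?case unfolding visible_docs_def
  proof (intro allI impI)
    fix N :: "nat set" assume finN: "finite N"
    obtain sY op where sY: "sY \<in> I_D D Y" "tnodes sY \<inter> N = {}" and g: "visible_update D u N sY op"
      using step.IH finN unfolding visible_docs_def by blast
    have "finite (N \<union> new_nodes op)" using finN g unfolding visible_update_def by simp
    then obtain T where T: "is_tree T" "tnodes T \<inter> (N \<union> new_nodes op \<union> tnodes sY) = {}"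
      "ins_tree T (troot T) sY \<in> I_D D X"
      using attach[OF w step.hyps(1) sY(1)] by blast
    have rT: "troot T \<in> tnodes T" using is_treeD(2)[OF T(1)] .
    have d: "tnodes sY \<inter> tnodes T = {}" and fr: "new_nodes op \<inter> tnodes T = {}" using T(2) by blast+
    have "visible_update D u N (ins_tree T (troot T) sY) op"
      using visible_update_in_context(1)[OF I_D_tree[OF sY(1)] T(1) d rT g fr] .
    moreover have "tnodes (ins_tree T (troot T) sY) \<inter> N = {}" using T(2) sY(2) by (auto simp: ins_tree_def)
    ultimately show "\<exists>s\<in>I_D D X. tnodes s \<inter> N = {} \<and> (\<exists>op. visible_update D u N s op)"
      using T(3) by blast
  qed
qed

section \<open>Allowed sequences that imitate forbidden updates\<close>

lemma replace_facts:
  assumes w: "wf_dtd D" and o: "conforming D t" and e: "(p, n) \<in> tedges t" and l: "tlab t p = Elem A"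
    and rg: "d_rg D A = RDisj Bs" and B': "B' \<in> set Bs" and s: "s \<in> I_D D B'"
    and d: "tnodes s \<inter> tnodes t = {}"
  shows "conforming D (ins_tree (del_tree t n) p s)" "apply_upd (ReplaceT n s) t = ins_tree (del_tree t n) p s"
    "(p, troot s) \<in> tedges (ins_tree (del_tree t n) p s)" "tlab (ins_tree (del_tree t n) p s) p = Elem A"
    "tlab (ins_tree (del_tree t n) p s) (troot s) = Elem B'"
    "troot (ins_tree (del_tree t n) p s) = troot t"
    "tnodes (ins_tree (del_tree t n) p s) \<subseteq> tnodes t \<union> tnodes s"
proof -
  have tr: "is_tree t" using conformingD(1)[OF o] .
  have L: "local_change t (ins_tree (del_tree t n) p s) p {}"
    using replace_local_change[OF w o e I_D_tree[OF s] d] .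
  show "conforming D (ins_tree (del_tree t n) p s)" using replace_conforming[OF w o e l rg B' s d] .
  show "apply_upd (ReplaceT n s) t = ins_tree (del_tree t n) p s" using parent_eq[OF tr e] by simp
  show "(p, troot s) \<in> tedges (ins_tree (del_tree t n) p s)" by (simp add: ins_tree_def)
  show "tlab (ins_tree (del_tree t n) p s) p = Elem A" using local_changeD(2,3,5)[OF L] l by simp
  show "tlab (ins_tree (del_tree t n) p s) (troot s) = Elem B'"
    using I_D_lab[OF s] is_treeD(2)[OF I_D_tree[OF s]] by (simp add: ins_tree_def)
  show "troot (ins_tree (del_tree t n) p s) = troot t" using local_changeD(1)[OF L] .
  show "tnodes (ins_tree (del_tree t n) p s) \<subseteq> tnodes t \<union> tnodes s"
    by (auto simp: ins_tree_def del_tree_def Let_def)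
qed

lemma replace_step_allowed:
  assumes G: "URep A X Y \<in> AA" and tr: "is_tree t" and e: "(q, n) \<in> tedges t"
    and lq: "tlab t q = Elem A" and ln: "tlab t n = Elem X" and s: "s \<in> I_D D Y" and ne: "X \<noteq> Y"
    and d: "tnodes s \<inter> tnodes t = {}"
  shows "valid_upd (ReplaceT n s) t" "ReplaceT n s \<in> sem_uats D AA t"
proof -
  show "valid_upd (ReplaceT n s) t" using edge_nodes[OF tr e] d by simp
  have "parent_labelled t n A" unfolding parent_labelled_def using e lq by blast
  then have "matches D t (ReplaceT n s) (URep A X Y)" using ln s ne by simp
  then show "ReplaceT n s \<in> sem_uats D AA t" unfolding sem_uats_def using G by blast
qed

lemma replace_chain:
  assumes w: "wf_dtd D" and AAv: "AA \<subseteq> valid_set D" and XY: "(X, Y) \<in> (replace_graph D AA A)\<^sup>+"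
    and rg: "d_rg D A = RDisj Bs" and sY: "sY \<in> I_D D Y"
  shows "conforming D t \<Longrightarrow> (q, n) \<in> tedges t \<Longrightarrow> tlab t q = Elem A \<Longrightarrow> tlab t n = Elem X
    \<Longrightarrow> tnodes sY \<inter> tnodes t = {}
    \<Longrightarrow> \<exists>ops. ops \<noteq> [] \<and> allowed D AA t ops \<and> same_tree (apply_seq ops t) (ins_tree (del_tree t n) q sY)"
  using XY
proof (induction arbitrary: t n rule: converse_trancl_induct)
  case (base X)
  have G: "URep A X Y \<in> AA" using base.hyps unfolding replace_graph_def by simp
  have ne: "X \<noteq> Y" using AAv G unfolding valid_set_def by auto
  note R = replace_step_allowed[OF G conformingD(1)[OF base.prems(1)] base.prems(2,3,4) sY ne base.prems(5)]
  have "apply_upd (ReplaceT n sY) t = ins_tree (del_tree t n) q sY"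
    using parent_eq[OF conformingD(1)[OF base.prems(1)] base.prems(2)] by simp
  then have "allowed D AA t [ReplaceT n sY] \<and> same_tree (apply_seq [ReplaceT n sY] t) (ins_tree (del_tree t n) q sY)"
    using R same_tree_refl by simp
  then show ?case by blast
next
  case (step X Z)
  have G: "URep A X Z \<in> AA" and ZB: "Z \<in> subs (d_rg D A)" using step.hyps(1) unfolding replace_graph_def by auto
  have ne: "X \<noteq> Z" and A: "A \<in> d_ele D" using AAv G unfolding valid_set_def by auto
  have o: "conforming D t" and e: "(q, n) \<in> tedges t" using step.prems(1,2) .
  have tr: "is_tree t" using conformingD(1)[OF o] .
  have "finite (tnodes t \<union> tnodes sY)" using is_treeD(1)[OF tr] I_D_finite[OF sY] by simp
  then obtain sZ where sZ: "sZ \<in> I_D D Z" "tnodes sZ \<inter> (tnodes t \<union> tnodes sY) = {}"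
    by (rule fresh_doc[OF w subs_ele[OF w A ZB]])
  have dZ: "tnodes sZ \<inter> tnodes t = {}" using sZ(2) by blast
  note F = replace_facts[OF w o e step.prems(3) rg _ sZ(1) dZ]
  let ?t1 = "ins_tree (del_tree t n) q sZ"
  have dY: "tnodes sY \<inter> tnodes ?t1 = {}" using F(7) sZ(2) step.prems(5) ZB rg by auto
  obtain ops where ops: "ops \<noteq> []" "allowed D AA ?t1 ops"
      "same_tree (apply_seq ops ?t1) (ins_tree (del_tree ?t1 (troot sZ)) q sY)"
    using step.IH[OF F(1,3,4,5) dY] ZB rg by auto
  note R = replace_step_allowed[OF G tr e step.prems(3,4) sZ(1) ne dZ]
  have al: "allowed D AA t (ReplaceT n sZ # ops)" using R ops(2) F(2) ZB rg by simp
  interpret Dl: deletion t n using tr edge_nodes[OF tr e] is_treeD(4)[OF tr] e by unfold_locales auto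
  have q: "q \<in> tnodes (del_tree t n)" using local_changeD(3)[OF delete_local_change[OF w o e]] .
  have "same_tree (del_tree ?t1 (troot sZ)) (del_tree t n)"
    using del_ins[OF is_treeD(3)[OF Dl.is_tree] I_D_tree[OF sZ(1)] _ q] dZ Dl.kept_sub Dl.simps(1) by blast
  then have "same_tree (apply_seq (ReplaceT n sZ # ops) t) (ins_tree (del_tree t n) q sY)"
    using same_tree_trans[OF ops(3) same_tree_ins] F(2) ZB rg by simp
  then show ?case using al by blast
qed

lemma star_swap_allowed:
  assumes ins: "UIns A B \<in> AA" and del: "UDel A B \<in> AA" and tT: "is_tree T" and q: "q \<in> tnodes T"
    and lq: "tlab T q = Elem A" and s: "s \<in> I_D D B" and s0: "s0 \<in> I_D D B"
    and d: "tnodes s \<inter> tnodes T = {}" and d0: "tnodes s0 \<inter> tnodes T = {}"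
  shows "allowed D AA (ins_tree T q s) [Delete (troot s), Insert q s0]
    \<and> same_tree (apply_seq [Delete (troot s), Insert q s0] (ins_tree T q s)) (ins_tree T q s0)"
proof -
  interpret I: insertion T s q using tT I_D_tree[OF s] q d by unfold_locales
  let ?t1 = "del_tree (ins_tree T q s) (troot s)"
  have e1: "same_tree ?t1 T" using del_ins[OF is_treeD(3)[OF tT] I_D_tree[OF s] d q] .
  have "(q, troot s) \<in> tedges (ins_tree T q s)" by (simp add: ins_tree_def)
  then have "parent_labelled (ins_tree T q s) (troot s) A"
    unfolding parent_labelled_def using I.lab_t[OF q] lq by (intro exI[of _ q]) simp
  then have "Delete (troot s) \<in> sem_uats D AA (ins_tree T q s)"
    unfolding sem_uats_def using I.simps(4)[OF I.rs(1)] I_D_lab[OF s] by (intro CollectI bexI[OF _ del]) simp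
  moreover have "valid_upd (Delete (troot s)) (ins_tree T q s)" using I.simps(1) I.rs(1) by simp
  moreover have "Insert q s0 \<in> sem_uats D AA ?t1"
    unfolding sem_uats_def using e1 q lq s0 unfolding same_tree_def by (intro CollectI bexI[OF _ ins]) auto
  moreover have "valid_upd (Insert q s0) ?t1" using e1 q d0 unfolding same_tree_def by auto
  moreover have "same_tree (ins_tree ?t1 q s0) (ins_tree T q s0)" using same_tree_ins[OF e1] .
  ultimately show ?thesis by simp
qed

text \<open>A cycle through \<open>B\<close> in the replace graph of \<open>A\<close> allows exchanging a \<open>B\<close>-child of an \<open>A\<close>-node
  for any tree of type \<open>B\<close>: replace it by a fresh tree of the next type on the cycle, then follow the
  cycle back to \<open>B\<close>.\<close>
lemma cycle_swap_allowed:
  assumes w: "wf_dtd D" and AAv: "AA \<subseteq> valid_set D" and cyc: "(B, B) \<in> (replace_graph D AA A)\<^sup>+"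
    and rg: "d_rg D A = RDisj Bs" and o: "conforming D (ins_tree T q s)" and tT: "is_tree T"
    and q: "q \<in> tnodes T" and lq: "tlab T q = Elem A" and s: "s \<in> I_D D B" and s0: "s0 \<in> I_D D B"
    and d: "tnodes s \<inter> tnodes T = {}" and d0: "tnodes s0 \<inter> tnodes T = {}"
  shows "\<exists>ops. ops \<noteq> [] \<and> allowed D AA (ins_tree T q s) ops
    \<and> same_tree (apply_seq ops (ins_tree T q s)) (ins_tree T q s0)"
proof -
  let ?t = "ins_tree T q s"
  obtain Z where Z1: "(B, Z) \<in> replace_graph D AA A" and Z2: "(Z, B) \<in> (replace_graph D AA A)\<^sup>*"
    using tranclD[OF cyc] by blast
  have G: "URep A B Z \<in> AA" and ZB: "Z \<in> subs (d_rg D A)" using Z1 unfolding replace_graph_def by auto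
  have ne: "B \<noteq> Z" and A: "A \<in> d_ele D" using AAv G unfolding valid_set_def by auto
  have ZBt: "(Z, B) \<in> (replace_graph D AA A)\<^sup>+" using Z2 ne by (simp add: rtrancl_eq_or_trancl)
  have tt: "is_tree ?t" using conformingD(1)[OF o] .
  have "finite (tnodes ?t \<union> tnodes s0)" using is_treeD(1)[OF tt] I_D_finite[OF s0] by simp
  then obtain sZ where sZ: "sZ \<in> I_D D Z" "tnodes sZ \<inter> (tnodes ?t \<union> tnodes s0) = {}"
    by (rule fresh_doc[OF w subs_ele[OF w A ZB]])
  have dZ: "tnodes sZ \<inter> tnodes ?t = {}" using sZ(2) by blast
  have e: "(q, troot s) \<in> tedges ?t" by (simp add: ins_tree_def)
  have rs: "troot s \<in> tnodes s" using is_treeD(2)[OF I_D_tree[OF s]] .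
  have lq': "tlab ?t q = Elem A" using lq q d by (auto simp: ins_tree_def)
  have ls: "tlab ?t (troot s) = Elem B" using I_D_lab[OF s] rs by (simp add: ins_tree_def)
  note F = replace_facts[OF w o e lq' rg _ sZ(1) dZ]
  let ?t1 = "ins_tree (del_tree ?t (troot s)) q sZ"
  have eD: "same_tree (del_tree ?t (troot s)) T" using del_ins[OF is_treeD(3)[OF tT] I_D_tree[OF s] d q] .
  have "tnodes ?t1 \<subseteq> tnodes T \<union> tnodes sZ" using eD unfolding same_tree_def by (auto simp: ins_tree_def)
  then have d1: "tnodes s0 \<inter> tnodes ?t1 = {}" using d0 sZ(2) by blast
  obtain ops where ops: "ops \<noteq> []" "allowed D AA ?t1 ops"
      "same_tree (apply_seq ops ?t1) (ins_tree (del_tree ?t1 (troot sZ)) q s0)"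
    using replace_chain[OF w AAv ZBt rg s0 F(1,3,4,5) d1] ZB rg by auto
  note R = replace_step_allowed[OF G tt e lq' ls sZ(1) ne dZ]
  have al: "allowed D AA ?t (ReplaceT (troot s) sZ # ops)" using R ops(2) F(2) ZB rg by simp
  have q0: "q \<in> tnodes (del_tree ?t (troot s))" using eD q unfolding same_tree_def by simp
  have "tedges (del_tree ?t (troot s)) \<subseteq> tnodes (del_tree ?t (troot s)) \<times> tnodes (del_tree ?t (troot s))"
    using eD is_treeD(3)[OF tT] unfolding same_tree_def by simp
  then have "same_tree (del_tree ?t1 (troot sZ)) T"
    using same_tree_trans[OF del_ins[OF _ I_D_tree[OF sZ(1)] _ q0] eD] dZ eD
    unfolding same_tree_def by (auto simp: ins_tree_def)
  then have "same_tree (apply_seq (ReplaceT (troot s) sZ # ops) ?t) (ins_tree T q s0)"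
    using same_tree_trans[OF ops(3) same_tree_ins] F(2) ZB rg by simp
  then show ?thesis using al by blast
qed

section \<open>Violated conditions yield inconsistencies\<close>

lemma visible_result_type:
  assumes w: "wf_dtd D" and s: "s \<in> I_D D B" and g: "visible_update D u N s op" and vu: "valid_uat D u"
  shows "apply_upd op s \<in> I_D D B"
proof -
  have v: "valid_upd op s" and m: "matches D s op u" using g unfolding visible_update_def by auto
  obtain m C where E: "conforming D (apply_upd op s)" "local_change s (apply_upd op s) m C"
    using update_effect[where AA = "{}", OF w I_D_conforming[OF s] v m vu] unfolding update_effect_def by blast
  have r: "troot s \<in> tnodes s" using is_treeD(2)[OF I_D_tree[OF s]] .
  have "troot s \<in> tnodes (apply_upd op s)"
    using is_treeD(2)[OF conformingD(1)[OF E(1)]] local_changeD(1)[OF E(2)] by simp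
  then have "tlab (apply_upd op s) (troot (apply_upd op s)) = Elem B"
    using local_changeD(1,5)[OF E(2)] r I_D_lab[OF s] by simp
  then show ?thesis using E(1) unfolding I_D_iff by simp
qed

lemma inconsistentI:
  assumes t: "t \<in> I_D D (d_rt D)" and u: "u \<in> FF" and v: "valid_upd op0 t" and m: "matches D t op0 u"
    and ni: "\<not> iso (apply_upd op0 t) t" and ops: "ops \<noteq> []" "allowed D AA t ops"
    and eq: "same_tree (apply_seq ops t) (apply_upd op0 t)"
  shows "\<not> consistent D AA FF"
proof -
  have "op0 \<in> sem_uats D FF t" using u m unfolding sem_uats_def by blast
  then show ?thesis using t v ni ops same_tree_iso[OF eq] unfolding consistent_def by blast
qed

lemma visible_forbidden_below:
  assumes w: "wf_dtd D" and FF: "FF \<subseteq> valid_set D" and nf: "\<not> nothing_forbidden_below D FF B"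
  obtains u s op0 where "u \<in> FF" "valid_uat D u" "s \<in> I_D D B" "visible_update D u {} s op0"
proof -
  obtain u where u: "u \<in> FF" "le_D D B (uat_elem u)" using nf unfolding nothing_forbidden_below_def by blast
  have vu: "valid_uat D u" using FF u(1) unfolding valid_set_def by blast
  have "visible_docs D u B"
    using visible_docs_lift[OF w visible_docs_exist[OF w vu] u(2)[unfolded le_D_def]] .
  then obtain s op0 where "s \<in> I_D D B" "visible_update D u {} s op0" unfolding visible_docs_def by blast
  then show ?thesis using that u(1) vu by blast
qed

lemma disj_context:
  assumes w: "wf_dtd D" and A: "A \<in> d_ele D" and rg: "d_rg D A = RDisj Bs" and B: "B \<in> set Bs"
    and s: "s \<in> I_D D B" and finN: "finite N"
  obtains T q where "is_tree T" "q \<in> tnodes T" "tnodes T \<inter> (N \<union> tnodes s) = {}"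
    "ins_tree T q s \<in> I_D D (d_rt D)" "tlab T q = Elem A"
proof -
  have fin: "finite (N \<union> tnodes s)" using finN I_D_finite[OF s] by simp
  obtain T' where T': "T' \<in> I_D D (d_rt D)" "tnodes T' \<inter> (N \<union> tnodes s) = {}"
    and "\<exists>q\<in>tnodes T'. tlab T' q = Elem A" using root_doc_with_node[OF w A fin] by blast
  then obtain q where q: "q \<in> tnodes T'" "tlab T' q = Elem A" by blast
  have o: "conforming D T'" using I_D_conforming[OF T'(1)] .
  have tr: "is_tree T'" using conformingD(1)[OF o] .
  obtain c where "children T' q = {c}" using single_child[OF conformingD(2)[OF o q(1)] q(2)] rg by blast
  then have c: "(q, c) \<in> tedges T'" unfolding children_def by blast
  have d: "tnodes s \<inter> tnodes T' = {}" using T'(2) by blast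
  note F = replace_facts[OF w o c q(2) rg B s d]
  have L: "local_change T' (del_tree T' c) q {}" using delete_local_change[OF w o c] .
  interpret Dl: deletion T' c using tr edge_nodes[OF tr c] is_treeD(4)[OF tr] c by unfold_locales auto
  have rT: "troot T' \<in> tnodes (ins_tree (del_tree T' c) q s)"
    using is_treeD(2)[OF conformingD(1)[OF F(1)]] F(6) by simp
  have "tlab (ins_tree (del_tree T' c) q s) (troot T') = Elem (d_rt D)"
    using local_changeD(5)[OF replace_local_change[OF w o c I_D_tree[OF s] d] is_treeD(2)[OF tr] rT]
      I_D_lab[OF T'(1)] by simp
  then have "ins_tree (del_tree T' c) q s \<in> I_D D (d_rt D)" using F(1,6) unfolding I_D_iff by simp
  moreover have "tnodes (del_tree T' c) \<inter> (N \<union> tnodes s) = {}" using T'(2) Dl.kept_sub Dl.simps(1) by blast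
  moreover have "tlab (del_tree T' c) q = Elem A" using q(2) Dl.simps(4) by simp
  ultimately show ?thesis using that[OF Dl.is_tree local_changeD(3)[OF L]] by blast
qed

text \<open>Violation of (1): delete the \<open>B\<close>-child and insert the forbidden-updated copy instead.\<close>
lemma star_violation:
  assumes w: "wf_dtd D" and pol: "policy D AA FF" and A: "A \<in> d_ele D" and rg: "d_rg D A = RStar B"
    and ins: "UIns A B \<in> AA" and del: "UDel A B \<in> AA" and nf: "\<not> nothing_forbidden_below D FF B"
  shows "\<not> consistent D AA FF"
proof -
  have FF: "FF \<subseteq> valid_set D" using pol unfolding policy_def by auto
  obtain u s op0 where u: "u \<in> FF" "valid_uat D u" and s: "s \<in> I_D D B"
    and g: "visible_update D u {} s op0" by (rule visible_forbidden_below[OF w FF nf])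
  have fin: "finite (tnodes s \<union> new_nodes op0)" using I_D_finite[OF s] g unfolding visible_update_def by simp
  obtain T where T: "T \<in> I_D D (d_rt D)" "tnodes T \<inter> (tnodes s \<union> new_nodes op0) = {}"
    and "\<exists>q\<in>tnodes T. tlab T q = Elem A" using root_doc_with_node[OF w A fin] by blast
  then obtain q where q: "q \<in> tnodes T" "tlab T q = Elem A" by blast
  have tT: "is_tree T" using I_D_tree[OF T(1)] .
  have d: "tnodes s \<inter> tnodes T = {}" and fr: "new_nodes op0 \<inter> tnodes T = {}" using T(2) by blast+
  let ?t = "ins_tree T q s" and ?s0 = "apply_upd op0 s"
  have "tlab ?t (troot ?t) = Elem (d_rt D)"
    using I_D_lab[OF T(1)] is_treeD(2)[OF tT] d by (auto simp: ins_tree_def)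
  then have tI: "?t \<in> I_D D (d_rt D)"
    using insert_conforming[OF I_D_conforming[OF T(1)] q(1) d s q(2) rg] unfolding I_D_iff by simp
  note V = visible_update_in_context[OF I_D_tree[OF s] tT d q(1) g fr]
  have d0: "tnodes ?s0 \<inter> tnodes T = {}" using nodes_apply[of op0 s] T(2) by blast
  have sw: "allowed D AA ?t [Delete (troot s), Insert q ?s0]
    \<and> same_tree (apply_seq [Delete (troot s), Insert q ?s0] ?t) (ins_tree T q ?s0)"
    using star_swap_allowed[OF ins del tT q(1) q(2) s visible_result_type[OF w s g u(2)] d d0] .
  show ?thesis
    by (rule inconsistentI[OF tI u(1), of op0 "[Delete (troot s), Insert q ?s0]"])
      (use V g sw visible_update_nontrivial[OF V(1)] same_tree_sym[OF V(2)] same_tree_trans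
        in \<open>auto simp: visible_update_def\<close>)
qed

text \<open>Violation of (2): the forbidden replacement is imitated along the replace-graph path.\<close>
lemma replace_violation:
  assumes w: "wf_dtd D" and pol: "policy D AA FF" and A: "A \<in> d_ele D" and rg: "d_rg D A = RDisj Bs"
    and XY: "(X, Y) \<in> (replace_graph D AA A)\<^sup>+" and F0: "URep A X Y \<in> FF"
  shows "\<not> consistent D AA FF"
proof -
  have AA: "AA \<subseteq> valid_set D" and FF: "FF \<subseteq> valid_set D" using pol unfolding policy_def by auto
  obtain Z where "(X, Z) \<in> replace_graph D AA A" using tranclD[OF XY] by blast
  then have XB: "X \<in> subs (d_rg D A)" unfolding replace_graph_def by auto
  obtain W where "(W, Y) \<in> replace_graph D AA A" using tranclD2[OF XY] by blast
  then have YB: "Y \<in> subs (d_rg D A)" unfolding replace_graph_def by auto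
  have ne: "X \<noteq> Y" using FF F0 unfolding valid_set_def by auto
  obtain sX where sX: "sX \<in> I_D D X" using fresh_doc[OF w subs_ele[OF w A XB] finite.emptyI] by blast
  obtain T q where T: "is_tree T" "q \<in> tnodes T" "tnodes T \<inter> ({} \<union> tnodes sX) = {}"
    "ins_tree T q sX \<in> I_D D (d_rt D)" "tlab T q = Elem A"
    using disj_context[OF w A rg _ sX finite.emptyI] XB rg by auto
  let ?t = "ins_tree T q sX"
  have tt: "is_tree ?t" using I_D_tree[OF T(4)] .
  obtain sY where sY: "sY \<in> I_D D Y" "tnodes sY \<inter> tnodes ?t = {}"
    using fresh_doc[OF w subs_ele[OF w A YB] is_treeD(1)[OF tt]] by blast
  have rs: "troot sX \<in> tnodes sX" using is_treeD(2)[OF I_D_tree[OF sX]] .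
  have e: "(q, troot sX) \<in> tedges ?t" by (simp add: ins_tree_def)
  have lq: "tlab ?t q = Elem A" using T(2,3,5) by (auto simp: ins_tree_def)
  have ln: "tlab ?t (troot sX) = Elem X" using I_D_lab[OF sX] rs by (simp add: ins_tree_def)
  have v0: "valid_upd (ReplaceT (troot sX) sY) ?t" using rs sY(2) by (simp add: ins_tree_def)
  have ap: "apply_upd (ReplaceT (troot sX) sY) ?t = ins_tree (del_tree ?t (troot sX)) q sY"
    using parent_eq[OF tt e] by simp
  obtain ops where ops: "ops \<noteq> []" "allowed D AA ?t ops"
      "same_tree (apply_seq ops ?t) (ins_tree (del_tree ?t (troot sX)) q sY)"
    using replace_chain[OF w AA XY rg sY(1) I_D_conforming[OF T(4)] e lq ln sY(2)] by blast
  have d1: "tnodes sX \<inter> tnodes T = {}" and d2: "tnodes sY \<inter> tnodes T = {}"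
    using T(3) sY(2) by (auto simp: ins_tree_def)
  obtain P where "count_nodes P (ins_tree (del_tree ?t (troot sX)) q sY) \<noteq> count_nodes P ?t"
    using replace_changes_count[OF w T(1,2) sX sY(1) ne d1 d2] by blast
  then have ni: "\<not> iso (apply_upd (ReplaceT (troot sX) sY) ?t) ?t" using ap iso_count by metis
  have "parent_labelled ?t (troot sX) A" unfolding parent_labelled_def using e lq by blast
  then have m: "matches D ?t (ReplaceT (troot sX) sY) (URep A X Y)" using ln sY(1) ne by simp
  show ?thesis by (rule inconsistentI[OF T(4) F0 v0 m ni ops(1,2)]) (use ops(3) ap in simp)
qed

text \<open>Violation of (3): follow the replacement cycle back to the forbidden-updated copy.\<close>
lemma cycle_violation:
  assumes w: "wf_dtd D" and pol: "policy D AA FF" and A: "A \<in> d_ele D" and rg: "d_rg D A = RDisj Bs"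
    and Bi: "Bi \<in> set Bs" and cyc: "(Bi, Bi) \<in> (replace_graph D AA A)\<^sup>+"
    and nf: "\<not> nothing_forbidden_below D FF Bi"
  shows "\<not> consistent D AA FF"
proof -
  have AA: "AA \<subseteq> valid_set D" and FF: "FF \<subseteq> valid_set D" using pol unfolding policy_def by auto
  obtain u s op0 where u: "u \<in> FF" "valid_uat D u" and s: "s \<in> I_D D Bi"
    and g: "visible_update D u {} s op0" by (rule visible_forbidden_below[OF w FF nf])
  have fin: "finite (new_nodes op0)" using g unfolding visible_update_def by simp
  obtain T q where T: "is_tree T" "q \<in> tnodes T" "tnodes T \<inter> (new_nodes op0 \<union> tnodes s) = {}"
    "ins_tree T q s \<in> I_D D (d_rt D)" "tlab T q = Elem A"
    by (rule disj_context[OF w A rg Bi s fin])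
  have d: "tnodes s \<inter> tnodes T = {}" and fr: "new_nodes op0 \<inter> tnodes T = {}" using T(3) by blast+
  let ?t = "ins_tree T q s" and ?s0 = "apply_upd op0 s"
  note V = visible_update_in_context[OF I_D_tree[OF s] T(1) d T(2) g fr]
  have d0: "tnodes ?s0 \<inter> tnodes T = {}" using nodes_apply[of op0 s] T(3) by blast
  obtain ops where ops: "ops \<noteq> []" "allowed D AA ?t ops" "same_tree (apply_seq ops ?t) (ins_tree T q ?s0)"
    using cycle_swap_allowed[OF w AA cyc rg I_D_conforming[OF T(4)] T(1,2,5) s
        visible_result_type[OF w s g u(2)] d d0] by blast
  show ?thesis
    by (rule inconsistentI[OF T(4) u(1) _ _ _ ops(1,2), of op0])
      (use V g ops(3) visible_update_nontrivial[OF V(1)] same_tree_sym[OF V(2)] same_tree_trans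
        in \<open>auto simp: visible_update_def\<close>)
qed

lemma consistent_iff_conditions:
  assumes w: "wf_dtd D" and pol: "policy D AA FF"
  shows "consistent D AA FF \<longleftrightarrow>
    star_condition D AA FF \<and> replace_condition D AA FF \<and> cycle_condition D AA FF"
proof
  assume c: "consistent D AA FF"
  have "star_condition D AA FF"
    unfolding star_condition_def using star_violation[OF w pol] c by blast
  moreover have "replace_condition D AA FF"
    unfolding replace_condition_def forbidden_edges_def using replace_violation[OF w pol] c by blast
  moreover have "cycle_condition D AA FF"
    unfolding cycle_condition_def using cycle_violation[OF w pol] c by blast
  ultimately show "star_condition D AA FF \<and> replace_condition D AA FF \<and> cycle_condition D AA FF" by blast
next
  assume "star_condition D AA FF \<and> replace_condition D AA FF \<and> cycle_condition D AA FF"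
  then show "consistent D AA FF" using conditions_imp_consistent[OF w pol] by blast
qed

theorem theorem1:
  fixes D :: "'l dtd" and AA FF :: "'l uat set"
  assumes "wf_dtd D" and "policy D AA FF"
  shows "consistent D AA FF \<longleftrightarrow>
     ((\<forall>A \<in> d_ele D. \<forall>B. d_rg D A = RStar B \<longrightarrow>
         UIns A B \<in> AA \<longrightarrow> UDel A B \<in> AA \<longrightarrow> nothing_forbidden_below D FF B)
    \<and> (\<forall>A \<in> d_ele D. \<forall>Bs. d_rg D A = RDisj Bs \<longrightarrow>
         (replace_graph D AA A)\<^sup>+ \<inter> forbidden_edges FF A = {})
    \<and> (\<forall>A \<in> d_ele D. \<forall>Bs. d_rg D A = RDisj Bs \<longrightarrow>
         (\<forall>Bi \<in> set Bs. (Bi, Bi) \<in> (replace_graph D AA A)\<^sup>+ \<longrightarrow> nothing_forbidden_below D FF Bi)))"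
  using consistent_iff_conditions[OF assms]
  unfolding star_condition_def replace_condition_def cycle_condition_def .

end
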